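(* Let $((f_t),(g_t),(h_t))$ be a $W_{1,+}$-geodesic on $G$ with associated function $m$, kernels $K,K^*$ and functions $P_t,Q_t$ as in the context. Then for all $x\in G$, $$\partial_tP_t(x)=(KP_t)(x),\qquad \partial_tQ_t(x)=-(K^*Q_t)(x).$$
   Context: $G$ is a connected, locally finite graph with graph distance $d$; geodesics are paths of adjacent vertices $\gamma(0),\dots,\gamma(n)$ with $n=d(\gamma(0),\gamma(n))$, $e_0(\gamma)=\gamma(0)$, $e_1(\gamma)=\gamma(n)$. For finitely supported probability distributions $f_0,f_1$: $\Pi_1(f_0,f_1)$ = couplings minimizing $\sum d(x,y)\pi(x,y)$ (minimum $W_1$), $\mathcal{C}(f_0,f_1)=\{(x,y):\pi(x,y)>0$ for some $\pi\in\Pi_1\}$; $W_1$-orientation: adjacent $x,y$ get $x\to y$ iff some geodesic $\gamma$ with $(e_0(\gamma),e_1(\gamma))\in\mathcal{C}(f_0,f_1)$ has $\gamma(k)=x,\gamma(k+1)=y$. Oriented paths: $\gamma(i)\to\gamma(i+1)$; $x\le y$ iff an oriented path (possibly of length $0$) goes from $x$ to $y$; $\gamma_i=\gamma(i)$. $E(G)=\{(xy):x\to y\}$, $T(G)$ triples $x_0\to x_1\to x_2$, $\mathcal{F}(x)=\{y:x\to y\}$, $\mathcal{E}(x)=\{y:y\to x\}$; $\nabla g(x_1)=\sum_{\mathcal{F}(x_1)}g(x_1x_2)-\sum_{\mathcal{E}(x_1)}g(x_0x_1)$, $\nabla h(x_1x_2)=\sum_{x_3\in\mathcal{F}(x_2)}h(x_1x_2x_3)-\sum_{x_0\in\mathcal{E}(x_1)}h(x_0x_1x_2)$.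 $W_{1,+}$-geodesic: a family $(f_t)_{t\in[0,1]}$ from $f_0$ to $f_1$ with $W_1(f_s,f_t)=|t-s|W_1(f_0,f_1)$, differentiable in $t$, with $g_t$ on $E(G)$, $h_t$ on $T(G)$, $\partial_tf_t=-\nabla g_t$, $\partial_tg_t=-\nabla h_t$, $g_t>0$, $f_t(x_1)h_t(x_0x_1x_2)=g_t(x_0x_1)g_t(x_1x_2)$. $C_\gamma(t)=f_t(\gamma_0)$ if $L(\gamma)=0$, $g_t(\gamma_0\gamma_1)$ if $L(\gamma)=1$, $\prod_{i=0}^{n-1}g_t(\gamma_i\gamma_{i+1})/\prod_{j=1}^{n-1}f_t(\gamma_j)$ if $n\ge2$. $\mathcal{A}=\{x:\mathcal{E}(x)=\emptyset\}$, $\mathcal{B}=\{x:\mathcal{F}(x)=\emptyset\}$; extremal oriented paths start in $\mathcal{A}$, end in $\mathcal{B}$; $\mathrm{SE}\Gamma_{1,x}$: oriented paths from a vertex of $\mathcal{A}$ to $x$; $\mathrm{SE}\Gamma_{2,x}$: oriented paths from $x$ to a vertex of $\mathcal{B}$. For $z_1\le\cdots\le z_p$, $m(z_1,\dots,z_p)=\sum_\gamma C_\gamma(0)$ over extremal oriented paths $\gamma$ with indices $k_1\le\dots\le k_p$, $\gamma(k_i)=z_i$ (for extremal $\gamma$, $C_\gamma(t)$ is independent of $t$). Kernels: $K(x_1,x_0)=m(x_0,x_1)/m(x_1)$ for $x_0\in\mathcal{E}(x_1)$, $K^*(x_0,x_1)=m(x_0,x_1)/m(x_0)$ for $x_1\in\mathcal{F}(x_0)$,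 zero otherwise; $Kf(x_1)=\sum_{x_0}K(x_1,x_0)f(x_0)$, $K^*f(x_0)=\sum_{x_1}K^*(x_0,x_1)f(x_1)$. $P_t(x)=\frac{1}{m(x)}\sum_{\gamma\in\mathrm{SE}\Gamma_{2,x}}C_\gamma(t)$, $Q_t(x)=\frac{1}{m(x)}\sum_{\gamma\in\mathrm{SE}\Gamma_{1,x}}C_\gamma(t)$. *)

theory Defs
  imports "HOL-Analysis.Analysis"
begin

definition walk :: "('v \<Rightarrow> 'v \<Rightarrow> bool) \<Rightarrow> 'v list \<Rightarrow> bool" where
  "walk adj p \<longleftrightarrow> p \<noteq> [] \<and> (\<forall>i. Suc i < length p \<longrightarrow> adj (p ! i) (p ! Suc i))"

definition graph_connected :: "('v \<Rightarrow> 'v \<Rightarrow> bool) \<Rightarrow> bool" where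
  "graph_connected adj \<longleftrightarrow> (\<forall>x y. \<exists>p. walk adj p \<and> hd p = x \<and> last p = y)"

definition locally_finite :: "('v \<Rightarrow> 'v \<Rightarrow> bool) \<Rightarrow> bool" where
  "locally_finite adj \<longleftrightarrow> (\<forall>x. finite {y. adj x y})"

definition gdist :: "('v \<Rightarrow> 'v \<Rightarrow> bool) \<Rightarrow> 'v \<Rightarrow> 'v \<Rightarrow> nat" where
  "gdist adj x y = (LEAST n. \<exists>p. walk adj p \<and> hd p = x \<and> last p = y \<and> length p = Suc n)"

definition geodesic :: "('v \<Rightarrow> 'v \<Rightarrow> bool) \<Rightarrow> 'v list \<Rightarrow> bool" where
  "geodesic adj p \<longleftrightarrow> walk adj p \<and> length p = Suc (gdist adj (hd p) (last p))"

definition prob_dist :: "('v \<Rightarrow> real) \<Rightarrow> bool" where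
  "prob_dist \<mu> \<longleftrightarrow> (\<forall>x. \<mu> x \<ge> 0) \<and> finite {x. \<mu> x \<noteq> 0} \<and> (\<Sum>x\<in>{x. \<mu> x \<noteq> 0}. \<mu> x) = 1"

definition coupling :: "('v \<Rightarrow> real) \<Rightarrow> ('v \<Rightarrow> real) \<Rightarrow> ('v \<Rightarrow> 'v \<Rightarrow> real) \<Rightarrow> bool" where
  "coupling \<mu> \<nu> \<pi> \<longleftrightarrow> (\<forall>x y. \<pi> x y \<ge> 0) \<and> finite {(x, y). \<pi> x y \<noteq> 0}
     \<and> (\<forall>x. (\<Sum>y\<in>{y. \<pi> x y \<noteq> 0}. \<pi> x y) = \<mu> x)
     \<and> (\<forall>y. (\<Sum>x\<in>{x. \<pi> x y \<noteq> 0}. \<pi> x y) = \<nu> y)"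

definition tcost :: "('v \<Rightarrow> 'v \<Rightarrow> bool) \<Rightarrow> ('v \<Rightarrow> 'v \<Rightarrow> real) \<Rightarrow> real" where
  "tcost adj \<pi> = (\<Sum>(x, y)\<in>{(x, y). \<pi> x y \<noteq> 0}. real (gdist adj x y) * \<pi> x y)"

definition W1 :: "('v \<Rightarrow> 'v \<Rightarrow> bool) \<Rightarrow> ('v \<Rightarrow> real) \<Rightarrow> ('v \<Rightarrow> real) \<Rightarrow> real" where
  "W1 adj \<mu> \<nu> = Inf (tcost adj ` {\<pi>. coupling \<mu> \<nu> \<pi>})"

definition opt_coupling :: "('v \<Rightarrow> 'v \<Rightarrow> bool) \<Rightarrow> ('v \<Rightarrow> real) \<Rightarrow> ('v \<Rightarrow> real) \<Rightarrow> ('v \<Rightarrow> 'v \<Rightarrow> real) \<Rightarrow> bool" where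
  "opt_coupling adj \<mu> \<nu> \<pi> \<longleftrightarrow> coupling \<mu> \<nu> \<pi> \<and> (\<forall>\<pi>'. coupling \<mu> \<nu> \<pi>' \<longrightarrow> tcost adj \<pi> \<le> tcost adj \<pi>')"

definition Csupp :: "('v \<Rightarrow> 'v \<Rightarrow> bool) \<Rightarrow> ('v \<Rightarrow> real) \<Rightarrow> ('v \<Rightarrow> real) \<Rightarrow> ('v \<times> 'v) set" where
  "Csupp adj \<mu> \<nu> = {(x, y). \<exists>\<pi>. opt_coupling adj \<mu> \<nu> \<pi> \<and> \<pi> x y > 0}"

definition w1_arrow :: "('v \<Rightarrow> 'v \<Rightarrow> bool) \<Rightarrow> ('v \<Rightarrow> real) \<Rightarrow> ('v \<Rightarrow> real) \<Rightarrow> 'v \<Rightarrow> 'v \<Rightarrow> bool" where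
  "w1_arrow adj \<mu> \<nu> x y \<longleftrightarrow> adj x y \<and>
     (\<exists>\<gamma>. geodesic adj \<gamma> \<and> (hd \<gamma>, last \<gamma>) \<in> Csupp adj \<mu> \<nu> \<and>
          (\<exists>k. Suc k < length \<gamma> \<and> \<gamma> ! k = x \<and> \<gamma> ! Suc k = y))"

definition oriented_path :: "('v \<Rightarrow> 'v \<Rightarrow> bool) \<Rightarrow> 'v list \<Rightarrow> bool" where
  "oriented_path ar p \<longleftrightarrow> p \<noteq> [] \<and> (\<forall>i. Suc i < length p \<longrightarrow> ar (p ! i) (p ! Suc i))"

definition sources :: "('v \<Rightarrow> 'v \<Rightarrow> bool) \<Rightarrow> 'v set" where
  "sources ar = {x. \<forall>y. \<not> ar y x}"

definition sinks :: "('v \<Rightarrow> 'v \<Rightarrow> bool) \<Rightarrow> 'v set" where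
  "sinks ar = {x. \<forall>y. \<not> ar x y}"

definition extremal_path :: "('v \<Rightarrow> 'v \<Rightarrow> bool) \<Rightarrow> 'v list \<Rightarrow> bool" where
  "extremal_path ar p \<longleftrightarrow> oriented_path ar p \<and> hd p \<in> sources ar \<and> last p \<in> sinks ar"

definition nabla_g :: "('v \<Rightarrow> 'v \<Rightarrow> bool) \<Rightarrow> ('v \<Rightarrow> 'v \<Rightarrow> real) \<Rightarrow> 'v \<Rightarrow> real" where
  "nabla_g ar g x1 = (\<Sum>x2\<in>{x2. ar x1 x2}. g x1 x2) - (\<Sum>x0\<in>{x0. ar x0 x1}. g x0 x1)"

definition nabla_h :: "('v \<Rightarrow> 'v \<Rightarrow> bool) \<Rightarrow> ('v \<Rightarrow> 'v \<Rightarrow> 'v \<Rightarrow> real) \<Rightarrow> 'v \<Rightarrow> 'v \<Rightarrow> real" where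
  "nabla_h ar h x1 x2 = (\<Sum>x3\<in>{x3. ar x2 x3}. h x1 x2 x3) - (\<Sum>x0\<in>{x0. ar x0 x1}. h x0 x1 x2)"

text \<open>C_\<gamma> evaluated with given f, g (i.e. at a given time)\<close>
definition Cpath :: "('v \<Rightarrow> real) \<Rightarrow> ('v \<Rightarrow> 'v \<Rightarrow> real) \<Rightarrow> 'v list \<Rightarrow> real" where
  "Cpath f g p =
     (if length p = 1 then f (hd p)
      else if length p = 2 then g (p ! 0) (p ! 1)
      else (\<Prod>i<length p - 1. g (p ! i) (p ! Suc i)) / (\<Prod>j\<in>{1..length p - 2}. f (p ! j)))"

definition visits_in_order :: "'v list \<Rightarrow> 'v list \<Rightarrow> bool" where
  "visits_in_order zs p \<longleftrightarrow> (\<exists>ks::nat list. length ks = length zs \<and> sorted ks \<and>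
      (\<forall>i<length zs. ks ! i < length p \<and> p ! (ks ! i) = zs ! i))"

definition mfun :: "('v \<Rightarrow> 'v \<Rightarrow> bool) \<Rightarrow> ('v \<Rightarrow> real) \<Rightarrow> ('v \<Rightarrow> 'v \<Rightarrow> real) \<Rightarrow> 'v list \<Rightarrow> real" where
  "mfun ar f0 g0 zs = (\<Sum>p\<in>{p. extremal_path ar p \<and> visits_in_order zs p}. Cpath f0 g0 p)"

definition Kop :: "('v \<Rightarrow> 'v \<Rightarrow> bool) \<Rightarrow> ('v \<Rightarrow> real) \<Rightarrow> ('v \<Rightarrow> 'v \<Rightarrow> real) \<Rightarrow> ('v \<Rightarrow> real) \<Rightarrow> 'v \<Rightarrow> real" where
  "Kop ar f0 g0 \<phi> x1 = (\<Sum>x0\<in>{x0. ar x0 x1}. (mfun ar f0 g0 [x0, x1] / mfun ar f0 g0 [x1]) * \<phi> x0)"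

definition Kstar :: "('v \<Rightarrow> 'v \<Rightarrow> bool) \<Rightarrow> ('v \<Rightarrow> real) \<Rightarrow> ('v \<Rightarrow> 'v \<Rightarrow> real) \<Rightarrow> ('v \<Rightarrow> real) \<Rightarrow> 'v \<Rightarrow> real" where
  "Kstar ar f0 g0 \<phi> x0 = (\<Sum>x1\<in>{x1. ar x0 x1}. (mfun ar f0 g0 [x0, x1] / mfun ar f0 g0 [x0]) * \<phi> x1)"

text \<open>P_t and Q_t (f, g are f_t, g_t; f0, g0 are f_0, g_0 for m)\<close>
definition Pfun :: "('v \<Rightarrow> 'v \<Rightarrow> bool) \<Rightarrow> ('v \<Rightarrow> real) \<Rightarrow> ('v \<Rightarrow> 'v \<Rightarrow> real) \<Rightarrow> ('v \<Rightarrow> real) \<Rightarrow> ('v \<Rightarrow> 'v \<Rightarrow> real) \<Rightarrow> 'v \<Rightarrow> real" where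
  "Pfun ar f0 g0 f g x = (1 / mfun ar f0 g0 [x]) *
     (\<Sum>p\<in>{p. oriented_path ar p \<and> hd p = x \<and> last p \<in> sinks ar}. Cpath f g p)"

definition Qfun :: "('v \<Rightarrow> 'v \<Rightarrow> bool) \<Rightarrow> ('v \<Rightarrow> real) \<Rightarrow> ('v \<Rightarrow> 'v \<Rightarrow> real) \<Rightarrow> ('v \<Rightarrow> real) \<Rightarrow> ('v \<Rightarrow> 'v \<Rightarrow> real) \<Rightarrow> 'v \<Rightarrow> real" where
  "Qfun ar f0 g0 f g x = (1 / mfun ar f0 g0 [x]) *
     (\<Sum>p\<in>{p. oriented_path ar p \<and> hd p \<in> sources ar \<and> last p = x}. Cpath f g p)"

definition W1plus_geodesic :: "('v \<Rightarrow> 'v \<Rightarrow> bool) \<Rightarrow> (real \<Rightarrow> 'v \<Rightarrow> real) \<Rightarrow>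
    (real \<Rightarrow> 'v \<Rightarrow> 'v \<Rightarrow> real) \<Rightarrow> (real \<Rightarrow> 'v \<Rightarrow> 'v \<Rightarrow> 'v \<Rightarrow> real) \<Rightarrow> bool" where
  "W1plus_geodesic adj f g h \<longleftrightarrow>
     (let ar = w1_arrow adj (f 0) (f 1) in
      (\<forall>t\<in>{0..1}. prob_dist (f t)) \<and>
      (\<forall>s\<in>{0..1}. \<forall>t\<in>{0..1}. W1 adj (f s) (f t) = \<bar>t - s\<bar> * W1 adj (f 0) (f 1)) \<and>
      (\<forall>x. \<forall>t\<in>{0..1}. ((\<lambda>s. f s x) has_real_derivative (- nabla_g ar (g t) x)) (at t within {0..1})) \<and>
      (\<forall>x y. ar x y \<longrightarrow> (\<forall>t\<in>{0..1}.
          ((\<lambda>s. g s x y) has_real_derivative (- nabla_h ar (h t) x y)) (at t within {0..1}))) \<and>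
      (\<forall>x y. ar x y \<longrightarrow> (\<forall>t\<in>{0..1}. g t x y > 0)) \<and>
      (\<forall>x0 x1 x2. ar x0 x1 \<longrightarrow> ar x1 x2 \<longrightarrow> (\<forall>t\<in>{0..1}.
          f t x1 * h t x0 x1 x2 = g t x0 x1 * g t x1 x2)))"

end

theory Submission
  imports Defs
begin

text \<open>
  By cyclical monotonicity of optimal plans, every oriented path of the \<open>W\<^sub>1\<close>-orientation is a
  geodesic of \<open>G\<close>. Hence the orientation is acyclic with finitely many arrows, and an arrow
  \<open>x0 \<rightarrow> x\<close> is the only oriented path from \<open>x0\<close> to \<open>x\<close>. The continuity equations give
  \<open>d/dt C(\<gamma>) = \<Sum> C(x0 # \<gamma>) - \<Sum> C(\<gamma> @ [x3])\<close>, summed over the arrows into the first and out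
  of the last vertex of \<open>\<gamma>\<close>; so \<open>C\<close> is constant on extremal paths and \<open>m\<close> can be evaluated at
  any time. For \<open>\<gamma>\<close> ending in a sink only the first sum survives, so the derivative of
  \<open>m(x) P\<^sub>t(x)\<close> is the sum of \<open>C(x0 # \<gamma>)\<close> over \<open>x0 \<rightarrow> x\<close> and \<open>\<gamma> \<in> SE\<Gamma>\<^sub>2\<^sub>,\<^sub>x\<close>. Extremal paths
  through \<open>x0 \<rightarrow> x\<close> split uniquely at that arrow, and \<open>C\<close> is multiplicative under gluing up to a
  division by \<open>f\<close> at the junction; so \<open>m(x0, x)\<close> is the inner sum over \<open>\<gamma>\<close> times the same
  factor that turns \<open>m(x0) P\<^sub>t(x0)\<close> into \<open>m(x0)\<close>, and that inner sum is \<open>m(x) K(x, x0) P\<^sub>t(x0)\<close>.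
  The case of \<open>Q\<^sub>t\<close> is symmetric.
\<close>

section \<open>Walks and graph distance\<close>

lemma oriented_path_eq_walk: "oriented_path ar = walk ar"
  by (simp add: fun_eq_iff oriented_path_def walk_def)

lemma walk_single [simp]: "walk adj [x]"
  by (simp add: walk_def)

lemma walk_nonempty: "walk adj p \<Longrightarrow> p \<noteq> []"
  by (simp add: walk_def)

lemma walk_Cons: "p \<noteq> [] \<Longrightarrow> walk adj (x # p) \<longleftrightarrow> adj x (hd p) \<and> walk adj p"
  by (cases p) (auto simp: walk_def nth_Cons less_Suc_eq_0_disj split: nat.splits)

lemma walk_append:
  assumes "walk adj p" "walk adj q" "last p = hd q"
  shows "walk adj (p @ tl q)"
  using assms
proof (induction p)
  case (Cons a p)
  show ?case
  proof (cases "p = []")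
    case True
    then show ?thesis using Cons.prems by (cases q) auto
  next
    case False
    then show ?thesis using Cons walk_Cons[of p] walk_Cons[of "p @ tl q" adj a] by simp
  qed
qed (simp add: walk_def)

lemma walk_take: "walk adj p \<Longrightarrow> 0 < n \<Longrightarrow> walk adj (take n p)"
  unfolding walk_def by (simp add: take_eq_Nil)

lemma walk_drop: "walk adj p \<Longrightarrow> n < length p \<Longrightarrow> walk adj (drop n p)"
  unfolding walk_def by simp

lemma walk_mono: "walk r p \<Longrightarrow> (\<And>x y. r x y \<Longrightarrow> s x y) \<Longrightarrow> walk s p"
  unfolding walk_def by auto

lemma gdist_attained:
  assumes "graph_connected adj"
  shows "\<exists>p. walk adj p \<and> hd p = x \<and> last p = y \<and> length p = Suc (gdist adj x y)"
proof -
  obtain p where p: "walk adj p" "hd p = x" "last p = y"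
    using assms unfolding graph_connected_def by blast
  then have "\<exists>n p. walk adj p \<and> hd p = x \<and> last p = y \<and> length p = Suc n"
    by (metis Suc_pred length_greater_0_conv walk_nonempty)
  then show ?thesis unfolding gdist_def by (rule LeastI_ex)
qed

lemma gdist_le: "walk adj p \<Longrightarrow> hd p = x \<Longrightarrow> last p = y \<Longrightarrow> length p = Suc n \<Longrightarrow> gdist adj x y \<le> n"
  unfolding gdist_def by (rule Least_le) blast

lemma gdist_le_length: "walk adj p \<Longrightarrow> gdist adj (hd p) (last p) \<le> length p - 1"
  using gdist_le[of adj p "hd p" "last p" "length p - 1"] walk_nonempty[of adj p] by simp

lemma gdist_refl [simp]: "gdist adj x x = 0"
  using gdist_le[of adj "[x]" x x 0] by simp

lemma gdist_adj: "adj x y \<Longrightarrow> gdist adj x y \<le> 1"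
  using gdist_le[of adj "[x, y]" x y 1] by (simp add: walk_def nth_Cons split: nat.splits)

lemma gdist_triangle:
  assumes "graph_connected adj"
  shows "gdist adj x z \<le> gdist adj x y + gdist adj y z"
proof -
  obtain p where p: "walk adj p" "hd p = x" "last p = y" "length p = Suc (gdist adj x y)"
    using gdist_attained[OF assms] by blast
  obtain q where q: "walk adj q" "hd q = y" "last q = z" "length q = Suc (gdist adj y z)"
    using gdist_attained[OF assms] by blast
  have "walk adj (p @ tl q)" using walk_append p q by metis
  moreover have "hd (p @ tl q) = x" "last (p @ tl q) = z"
    using p q by (cases p; cases q; auto simp: last_append)+
  ultimately show ?thesis using gdist_le[of adj "p @ tl q"] p q by simp
qed

lemma finite_walks_from:
  assumes "locally_finite adj"
  shows "finite {p. walk adj p \<and> hd p = a \<and> length p = Suc n}"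
proof (induction n arbitrary: a)
  case 0
  have "{p. walk adj p \<and> hd p = a \<and> length p = Suc 0} \<subseteq> {[a]}"
    by (auto simp: length_Suc_conv)
  then show ?case using finite_subset by blast
next
  case (Suc n)
  let ?W = "\<lambda>b. {p. walk adj p \<and> hd p = b \<and> length p = Suc n}"
  have "{p. walk adj p \<and> hd p = a \<and> length p = Suc (Suc n)}
      \<subseteq> (\<lambda>(b, q). a # q) ` (SIGMA b:{b. adj a b}. ?W b)"
  proof
    fix p assume p: "p \<in> {p. walk adj p \<and> hd p = a \<and> length p = Suc (Suc n)}"
    then obtain q where q: "p = a # q" "length q = Suc n" by (auto simp: length_Suc_conv)
    moreover have "q \<noteq> []" using q(2) by auto
    ultimately have "adj a (hd q) \<and> walk adj q" using p walk_Cons[of q adj a] by auto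
    then show "p \<in> (\<lambda>(b, q). a # q) ` (SIGMA b:{b. adj a b}. ?W b)"
      using q by (auto intro!: image_eqI[where x="(hd q, q)"])
  qed
  moreover have "finite (SIGMA b:{b. adj a b}. ?W b)"
    using assms Suc.IH unfolding locally_finite_def by blast
  ultimately show ?case by (meson finite_imageI finite_subset)
qed

lemma geodesic_through_edge:
  assumes "graph_connected adj" "geodesic adj \<gamma>" "Suc k < length \<gamma>"
  shows "gdist adj (hd \<gamma>) (last \<gamma>) = gdist adj (hd \<gamma>) (\<gamma> ! k) + 1 + gdist adj (\<gamma> ! Suc k) (last \<gamma>)"
proof -
  have w: "walk adj \<gamma>" and len: "length \<gamma> = Suc (gdist adj (hd \<gamma>) (last \<gamma>))"
    using assms(2) by (auto simp: geodesic_def)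
  have "last (take (Suc k) \<gamma>) = \<gamma> ! k"
    using assms(3) by (simp add: take_Suc_conv_app_nth)
  then have "gdist adj (hd \<gamma>) (\<gamma> ! k) \<le> k"
    using gdist_le_length[OF walk_take[OF w, of "Suc k"]] assms(3) walk_nonempty[OF w] by simp
  moreover have "gdist adj (\<gamma> ! Suc k) (last \<gamma>) \<le> length \<gamma> - Suc (Suc k)"
    using gdist_le_length[OF walk_drop[OF w assms(3)]] assms(3) by (simp add: hd_drop_conv_nth)
  moreover have "gdist adj (\<gamma> ! k) (\<gamma> ! Suc k) \<le> 1"
    using w assms(3) unfolding walk_def by (intro gdist_adj) auto
  moreover have "gdist adj (hd \<gamma>) (last \<gamma>)
      \<le> gdist adj (hd \<gamma>) (\<gamma> ! k) + gdist adj (\<gamma> ! k) (\<gamma> ! Suc k) + gdist adj (\<gamma> ! Suc k) (last \<gamma>)"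
    using gdist_triangle[OF assms(1), of "hd \<gamma>" "last \<gamma>" "\<gamma> ! k"]
      gdist_triangle[OF assms(1), of "\<gamma> ! k" "last \<gamma>" "\<gamma> ! Suc k"] by linarith
  ultimately show ?thesis using len assms(3) by linarith
qed

section \<open>Cyclical monotonicity of optimal couplings\<close>

lemma sum_lessThan_rotate:
  fixes F :: "nat \<Rightarrow> 'a::comm_monoid_add"
  shows "(\<Sum>i<k. F (Suc i mod k)) = (\<Sum>i<k. F i)"
proof (cases k)
  case (Suc m)
  have "(\<Sum>i<Suc m. F (Suc i mod Suc m)) = (\<Sum>i<m. F (Suc i)) + F 0"
    by (simp add: mod_Suc)
  also have "\<dots> = (\<Sum>i<Suc m. F i)"
    by (subst sum.lessThan_Suc_shift) (simp add: add.commute)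
  finally show ?thesis using Suc by simp
qed simp

lemma sum_sum_mult_of_bool_pair:
  fixes c :: "'a \<Rightarrow> 'a \<Rightarrow> real"
  assumes "finite V" "u \<in> V" "v \<in> V"
  shows "(\<Sum>x\<in>V. \<Sum>y\<in>V. c x y * of_bool (x = u \<and> y = v)) = c u v"
proof -
  have "(\<Sum>x\<in>V. \<Sum>y\<in>V. c x y * of_bool (x = u \<and> y = v)) = (\<Sum>x\<in>V. if x = u then c x v else 0)"
    using assms
    by (intro sum.cong) (auto simp: of_bool_def if_distrib[of "(*) _"] sum.delta cong: if_cong)
  then show ?thesis using assms by simp
qed

definition supp_vertices :: "('v \<Rightarrow> 'v \<Rightarrow> real) \<Rightarrow> 'v set" where
  "supp_vertices \<pi> = fst ` {(x, y). \<pi> x y \<noteq> 0} \<union> snd ` {(x, y). \<pi> x y \<noteq> 0}"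

lemma supp_subset_supp_vertices: "{(x, y). \<pi> x y \<noteq> 0} \<subseteq> supp_vertices \<pi> \<times> supp_vertices \<pi>"
  unfolding supp_vertices_def by (auto intro: rev_image_eqI)

lemma finite_supp_vertices: "coupling \<mu> \<nu> \<pi> \<Longrightarrow> finite (supp_vertices \<pi>)"
  unfolding coupling_def supp_vertices_def by blast

lemma coupling_iff_on:
  assumes fin: "finite V" and supp: "{(x, y). \<pi> x y \<noteq> 0} \<subseteq> V \<times> V"
  shows "coupling \<mu> \<nu> \<pi> \<longleftrightarrow>
    (\<forall>x y. 0 \<le> \<pi> x y) \<and> (\<forall>x. (\<Sum>y\<in>V. \<pi> x y) = \<mu> x) \<and> (\<forall>y. (\<Sum>x\<in>V. \<pi> x y) = \<nu> y)"
proof -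
  have "(\<Sum>y\<in>{y. \<pi> x y \<noteq> 0}. \<pi> x y) = (\<Sum>y\<in>V. \<pi> x y)" for x
    by (rule sum.mono_neutral_left) (use fin supp in auto)
  moreover have "(\<Sum>x\<in>{x. \<pi> x y \<noteq> 0}. \<pi> x y) = (\<Sum>x\<in>V. \<pi> x y)" for y
    by (rule sum.mono_neutral_left) (use fin supp in auto)
  moreover have "finite {(x, y). \<pi> x y \<noteq> 0}"
    by (rule finite_subset[of _ "V \<times> V"]) (use fin supp in auto)
  ultimately show ?thesis unfolding coupling_def by auto
qed

lemma tcost_on:
  assumes fin: "finite V" and supp: "{(x, y). \<pi> x y \<noteq> 0} \<subseteq> V \<times> V"
  shows "tcost adj \<pi> = (\<Sum>x\<in>V. \<Sum>y\<in>V. real (gdist adj x y) * \<pi> x y)"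
proof -
  have "tcost adj \<pi> = (\<Sum>(x, y)\<in>V \<times> V. real (gdist adj x y) * \<pi> x y)"
    unfolding tcost_def by (rule sum.mono_neutral_left) (use fin supp in auto)
  then show ?thesis by (simp add: sum.cartesian_product)
qed

lemma coupling_marginals_pos:
  assumes "coupling \<mu> \<nu> \<pi>" "0 < \<pi> x y"
  shows "0 < \<mu> x" "0 < \<nu> y"
proof -
  let ?V = "supp_vertices \<pi>"
  have fin: "finite ?V" and supp: "{(x, y). \<pi> x y \<noteq> 0} \<subseteq> ?V \<times> ?V"
    using finite_supp_vertices[OF assms(1)] supp_subset_supp_vertices by auto
  have marg: "(\<forall>x y. 0 \<le> \<pi> x y) \<and> (\<forall>x. (\<Sum>y\<in>?V. \<pi> x y) = \<mu> x) \<and> (\<forall>y. (\<Sum>x\<in>?V. \<pi> x y) = \<nu> y)"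
    using coupling_iff_on[OF fin supp] assms(1) by blast
  have xy: "x \<in> ?V" "y \<in> ?V" using subsetD[OF supp, of "(x, y)"] assms(2) by auto
  have "\<pi> x y \<le> (\<Sum>y\<in>?V. \<pi> x y)" "\<pi> x y \<le> (\<Sum>x\<in>?V. \<pi> x y)"
    using fin xy marg by (intro member_le_sum; simp)+
  then show "0 < \<mu> x" "0 < \<nu> y" using marg assms(2) by auto
qed

lemma supp_average_subset:
  assumes "\<And>i. i < k \<Longrightarrow> {(x, y). \<pi>s i x y \<noteq> 0} \<subseteq> V \<times> V"
  shows "{(x, y). (\<Sum>i<k. \<pi>s i x y) / real k \<noteq> 0} \<subseteq> V \<times> V"
proof clarify
  fix x y assume "(\<Sum>i<k. \<pi>s i x y) / real k \<noteq> 0"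
  then obtain i where "i < k" "\<pi>s i x y \<noteq> 0"
    using sum.neutral[of "{..<k}" "\<lambda>i. \<pi>s i x y"] by fastforce
  then show "x \<in> V \<and> y \<in> V" using assms by blast
qed

lemma tcost_average:
  assumes "finite V" "\<And>i. i < k \<Longrightarrow> {(x, y). \<pi>s i x y \<noteq> 0} \<subseteq> V \<times> V"
  shows "tcost adj (\<lambda>x y. (\<Sum>i<k. \<pi>s i x y) / real k) = (\<Sum>i<k. tcost adj (\<pi>s i)) / real k"
proof -
  define \<pi> where "\<pi> = (\<lambda>x y. (\<Sum>i<k. \<pi>s i x y) / real k)"
  have supp: "{(x, y). \<pi> x y \<noteq> 0} \<subseteq> V \<times> V"
    unfolding \<pi>_def using supp_average_subset[OF assms(2)] by simp
  have "tcost adj \<pi> = (\<Sum>x\<in>V. \<Sum>y\<in>V. \<Sum>i<k. real (gdist adj x y) * \<pi>s i x y) / real k"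
    unfolding tcost_on[OF assms(1) supp] unfolding \<pi>_def
    by (simp only: times_divide_eq_right sum_distrib_left sum_divide_distrib[symmetric])
  also have "\<dots> = (\<Sum>x\<in>V. \<Sum>i<k. \<Sum>y\<in>V. real (gdist adj x y) * \<pi>s i x y) / real k"
    by (simp only: sum.swap[of _ V "{..<k}"])
  also have "\<dots> = (\<Sum>i<k. \<Sum>x\<in>V. \<Sum>y\<in>V. real (gdist adj x y) * \<pi>s i x y) / real k"
    by (rule arg_cong[where f="\<lambda>z. z / real k"], rule sum.swap)
  also have "\<dots> = (\<Sum>i<k. tcost adj (\<pi>s i)) / real k"
    using tcost_on[OF assms] by simp
  finally show ?thesis unfolding \<pi>_def .
qed

lemma opt_coupling_average:
  assumes "0 < k" and opt: "\<And>i. i < k \<Longrightarrow> opt_coupling adj \<mu> \<nu> (\<pi>s i)"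
  shows "opt_coupling adj \<mu> \<nu> (\<lambda>x y. (\<Sum>i<k. \<pi>s i x y) / real k)"
proof -
  define \<pi> where "\<pi> = (\<lambda>x y. (\<Sum>i<k. \<pi>s i x y) / real k)"
  have cpl: "coupling \<mu> \<nu> (\<pi>s i)" if "i < k" for i
    using opt[OF that] by (simp add: opt_coupling_def)
  define V where "V = (\<Union>i<k. supp_vertices (\<pi>s i))"
  have finV: "finite V"
    unfolding V_def using finite_supp_vertices[OF cpl] by auto
  have suppV: "{(x, y). \<pi>s i x y \<noteq> 0} \<subseteq> V \<times> V" if "i < k" for i
    using supp_subset_supp_vertices[of "\<pi>s i"] that unfolding V_def by blast
  have marg: "(\<forall>x y. 0 \<le> \<pi>s i x y) \<and> (\<forall>x. (\<Sum>y\<in>V. \<pi>s i x y) = \<mu> x) \<and> (\<forall>y. (\<Sum>x\<in>V. \<pi>s i x y) = \<nu> y)"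
    if "i < k" for i
    using coupling_iff_on[OF finV suppV[OF that]] cpl[OF that] by blast
  have supp: "{(x, y). \<pi> x y \<noteq> 0} \<subseteq> V \<times> V"
    unfolding \<pi>_def using supp_average_subset[OF suppV] by simp
  have "coupling \<mu> \<nu> \<pi>"
  proof (subst coupling_iff_on[OF finV supp], intro conjI allI)
    show "0 \<le> \<pi> x y" for x y
      unfolding \<pi>_def using marg by (auto intro!: sum_nonneg divide_nonneg_nonneg)
    have "(\<Sum>y\<in>V. \<Sum>i<k. \<pi>s i x y) = (\<Sum>i<k. \<Sum>y\<in>V. \<pi>s i x y)" for x
      by (rule sum.swap)
    then show "(\<Sum>y\<in>V. \<pi> x y) = \<mu> x" for x
      unfolding \<pi>_def sum_divide_distrib[symmetric] using marg \<open>0 < k\<close> by simp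
    have "(\<Sum>x\<in>V. \<Sum>i<k. \<pi>s i x y) = (\<Sum>i<k. \<Sum>x\<in>V. \<pi>s i x y)" for y
      by (rule sum.swap)
    then show "(\<Sum>x\<in>V. \<pi> x y) = \<nu> y" for y
      unfolding \<pi>_def sum_divide_distrib[symmetric] using marg \<open>0 < k\<close> by simp
  qed
  moreover have "tcost adj (\<pi>s i) = tcost adj (\<pi>s 0)" if "i < k" for i
    using opt[OF that] opt[OF \<open>0 < k\<close>] cpl[OF that] cpl[OF \<open>0 < k\<close>]
    unfolding opt_coupling_def by (meson antisym)
  then have "(\<Sum>i<k. tcost adj (\<pi>s i)) = (\<Sum>i<k. tcost adj (\<pi>s 0))"
    by (metis (no_types, lifting) lessThan_iff sum.cong)
  then have "tcost adj \<pi> = tcost adj (\<pi>s 0)"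
    using tcost_average[OF finV suppV, where adj=adj] \<open>0 < k\<close> unfolding \<pi>_def by simp
  ultimately have "opt_coupling adj \<mu> \<nu> \<pi>"
    using opt[OF \<open>0 < k\<close>] by (simp add: opt_coupling_def)
  then show ?thesis unfolding \<pi>_def .
qed

lemma sum_of_bool_pair_left:
  "finite V \<Longrightarrow> v \<in> V \<Longrightarrow> (\<Sum>y\<in>V. of_bool (x = u \<and> y = v) :: real) = of_bool (x = u)"
  by (cases "x = u") auto

lemma sum_of_bool_pair_right:
  "finite V \<Longrightarrow> u \<in> V \<Longrightarrow> (\<Sum>x\<in>V. of_bool (x = u \<and> y = v) :: real) = of_bool (y = v)"
  by (cases "y = v") auto

text \<open>The signed measure moving a unit of mass from each pair \<open>(a i, b i)\<close> to
  \<open>(a (i + 1 mod k), b i)\<close>.\<close>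

definition cyclic_exchange :: "nat \<Rightarrow> (nat \<Rightarrow> 'v) \<Rightarrow> (nat \<Rightarrow> 'v) \<Rightarrow> 'v \<Rightarrow> 'v \<Rightarrow> real" where
  "cyclic_exchange k a b x y =
     (\<Sum>i<k. of_bool (x = a (Suc i mod k) \<and> y = b i) - of_bool (x = a i \<and> y = b i))"

lemma cyclic_exchange_row_sum:
  assumes "finite V" "\<And>i. i < k \<Longrightarrow> b i \<in> V"
  shows "(\<Sum>y\<in>V. cyclic_exchange k a b x y) = 0"
proof -
  have "(\<Sum>y\<in>V. cyclic_exchange k a b x y)
      = (\<Sum>i<k. \<Sum>y\<in>V. of_bool (x = a (Suc i mod k) \<and> y = b i) - of_bool (x = a i \<and> y = b i))"
    unfolding cyclic_exchange_def by (rule sum.swap)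
  also have "\<dots> = (\<Sum>i<k. of_bool (x = a (Suc i mod k)) - of_bool (x = a i))"
    using assms by (intro sum.cong refl) (simp add: sum_subtractf sum_of_bool_pair_left)
  also have "\<dots> = 0"
    using sum_lessThan_rotate[of "\<lambda>i. of_bool (x = a i) :: real"] by (simp add: sum_subtractf)
  finally show ?thesis .
qed

lemma cyclic_exchange_col_sum:
  assumes "finite V" "\<And>i. i < k \<Longrightarrow> a i \<in> V"
  shows "(\<Sum>x\<in>V. cyclic_exchange k a b x y) = 0"
proof -
  have "(\<Sum>x\<in>V. cyclic_exchange k a b x y)
      = (\<Sum>i<k. \<Sum>x\<in>V. of_bool (x = a (Suc i mod k) \<and> y = b i) - of_bool (x = a i \<and> y = b i))"
    unfolding cyclic_exchange_def by (rule sum.swap)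
  also have "\<dots> = 0"
  proof (rule sum.neutral, rule ballI)
    fix i assume "i \<in> {..<k}"
    then have "a (Suc i mod k) \<in> V" "a i \<in> V" using assms(2) by auto
    then show "(\<Sum>x\<in>V. of_bool (x = a (Suc i mod k) \<and> y = b i) - of_bool (x = a i \<and> y = b i))
        = (0::real)"
      unfolding sum_subtractf using sum_of_bool_pair_right[OF assms(1), of _ y "b i"] by simp
  qed
  finally show ?thesis .
qed

lemma cyclic_exchange_ge: "- real k \<le> cyclic_exchange k a b x y"
proof -
  have "(\<Sum>i<k. - 1) \<le> cyclic_exchange k a b x y"
    unfolding cyclic_exchange_def by (intro sum_mono) simp
  then show ?thesis by simp
qed

lemma cyclic_exchange_nonneg:
  "(\<And>i. i < k \<Longrightarrow> x \<noteq> a i \<or> y \<noteq> b i) \<Longrightarrow> 0 \<le> cyclic_exchange k a b x y"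
  unfolding cyclic_exchange_def by (intro sum_nonneg) auto

lemma cyclic_exchange_nonzero:
  assumes "cyclic_exchange k a b x y \<noteq> 0"
  shows "x \<in> a ` {..<k} \<and> y \<in> b ` {..<k}"
proof -
  obtain i where i: "i < k"
    "of_bool (x = a (Suc i mod k) \<and> y = b i) - of_bool (x = a i \<and> y = b i) \<noteq> (0::real)"
    using assms unfolding cyclic_exchange_def by (meson lessThan_iff sum.neutral)
  then have "(x = a (Suc i mod k) \<and> y = b i) \<or> (x = a i \<and> y = b i)"
    by auto
  moreover have "Suc i mod k < k" using i(1) by simp
  ultimately show ?thesis using i(1) by blast
qed

lemma cyclic_exchange_cost:
  fixes c :: "'v \<Rightarrow> 'v \<Rightarrow> real"
  assumes "finite V" "\<And>i. i < k \<Longrightarrow> a i \<in> V" "\<And>i. i < k \<Longrightarrow> b i \<in> V"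
  shows "(\<Sum>x\<in>V. \<Sum>y\<in>V. c x y * cyclic_exchange k a b x y)
    = (\<Sum>i<k. c (a (Suc i mod k)) (b i) - c (a i) (b i))"
proof -
  let ?e = "\<lambda>u v x y. c x y * of_bool (x = u \<and> y = v)"
  have "(\<Sum>x\<in>V. \<Sum>y\<in>V. c x y * cyclic_exchange k a b x y)
      = (\<Sum>x\<in>V. \<Sum>y\<in>V. \<Sum>i<k. ?e (a (Suc i mod k)) (b i) x y - ?e (a i) (b i) x y)"
    unfolding cyclic_exchange_def by (simp only: sum_distrib_left right_diff_distrib)
  also have "\<dots> = (\<Sum>x\<in>V. \<Sum>i<k. \<Sum>y\<in>V. ?e (a (Suc i mod k)) (b i) x y - ?e (a i) (b i) x y)"
    by (simp only: sum.swap[of _ V "{..<k}"])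
  also have "\<dots> = (\<Sum>i<k. \<Sum>x\<in>V. \<Sum>y\<in>V. ?e (a (Suc i mod k)) (b i) x y - ?e (a i) (b i) x y)"
    by (rule sum.swap)
  also have "\<dots> = (\<Sum>i<k. c (a (Suc i mod k)) (b i) - c (a i) (b i))"
  proof (intro sum.cong refl)
    fix i assume "i \<in> {..<k}"
    then have "a (Suc i mod k) \<in> V" "a i \<in> V" "b i \<in> V" using assms(2,3) by auto
    then show "(\<Sum>x\<in>V. \<Sum>y\<in>V. ?e (a (Suc i mod k)) (b i) x y - ?e (a i) (b i) x y)
        = c (a (Suc i mod k)) (b i) - c (a i) (b i)"
      using assms(1) by (simp only: sum_subtractf sum_sum_mult_of_bool_pair)
  qed
  finally show ?thesis .
qed

lemma cyclic_exchange_perturbation: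
  assumes cpl: "coupling \<mu> \<nu> \<pi>" and pos: "\<And>i. i < k \<Longrightarrow> 0 < \<pi> (a i) (b i)"
    and nonneg: "\<And>x y. 0 \<le> \<pi> x y + \<epsilon> * cyclic_exchange k a b x y"
  shows "coupling \<mu> \<nu> (\<lambda>x y. \<pi> x y + \<epsilon> * cyclic_exchange k a b x y)" (is "coupling _ _ ?\<pi>'")
    and "tcost adj (\<lambda>x y. \<pi> x y + \<epsilon> * cyclic_exchange k a b x y) = tcost adj \<pi>
      + \<epsilon> * (\<Sum>i<k. real (gdist adj (a (Suc i mod k)) (b i)) - real (gdist adj (a i) (b i)))"
proof -
  define V where "V = supp_vertices \<pi>"
  have finV: "finite V" unfolding V_def by (rule finite_supp_vertices[OF cpl])
  have supp: "{(x, y). \<pi> x y \<noteq> 0} \<subseteq> V \<times> V" unfolding V_def by (rule supp_subset_supp_vertices)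
  have "a i \<in> V \<and> b i \<in> V" if "i < k" for i
    using subsetD[OF supp, of "(a i, b i)"] pos[OF that] by simp
  then have aV: "\<And>i. i < k \<Longrightarrow> a i \<in> V" and bV: "\<And>i. i < k \<Longrightarrow> b i \<in> V" by simp_all
  have supp': "{(x, y). ?\<pi>' x y \<noteq> 0} \<subseteq> V \<times> V"
  proof clarify
    fix x y assume "?\<pi>' x y \<noteq> 0"
    then have "\<pi> x y \<noteq> 0 \<or> cyclic_exchange k a b x y \<noteq> 0" by auto
    then show "x \<in> V \<and> y \<in> V"
      using supp cyclic_exchange_nonzero[of k a b x y] aV bV by blast
  qed
  have marg: "(\<forall>x y. 0 \<le> \<pi> x y) \<and> (\<forall>x. (\<Sum>y\<in>V. \<pi> x y) = \<mu> x) \<and> (\<forall>y. (\<Sum>x\<in>V. \<pi> x y) = \<nu> y)"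
    using coupling_iff_on[OF finV supp] cpl by blast
  have "(\<Sum>y\<in>V. ?\<pi>' x y) = \<mu> x" for x
    unfolding sum.distrib sum_distrib_left[symmetric] using marg cyclic_exchange_row_sum[OF finV bV]
    by simp
  moreover have "(\<Sum>x\<in>V. ?\<pi>' x y) = \<nu> y" for y
    unfolding sum.distrib sum_distrib_left[symmetric] using marg cyclic_exchange_col_sum[OF finV aV]
    by simp
  ultimately show "coupling \<mu> \<nu> ?\<pi>'"
    using coupling_iff_on[OF finV supp'] nonneg by blast
  have "tcost adj ?\<pi>' = tcost adj \<pi>
      + \<epsilon> * (\<Sum>x\<in>V. \<Sum>y\<in>V. real (gdist adj x y) * cyclic_exchange k a b x y)"
    unfolding tcost_on[OF finV supp'] tcost_on[OF finV supp]
    by (simp add: distrib_left sum.distrib sum_distrib_left mult.left_commute)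
  then show "tcost adj ?\<pi>' = tcost adj \<pi>
      + \<epsilon> * (\<Sum>i<k. real (gdist adj (a (Suc i mod k)) (b i)) - real (gdist adj (a i) (b i)))"
    using cyclic_exchange_cost[OF finV aV bV, where c="\<lambda>x y. real (gdist adj x y)"] by simp
qed

text \<open>Shifting mass \<open>\<delta> / k\<close> along the cycle keeps the plan nonnegative, where \<open>\<delta>\<close> is the
  least mass on the pairs \<open>(a i, b i)\<close>; optimality then forbids a cost decrease.\<close>

lemma opt_coupling_cyclically_monotone:
  assumes opt: "opt_coupling adj \<mu> \<nu> \<pi>" and pos: "\<And>i. i < k \<Longrightarrow> 0 < \<pi> (a i) (b i)"
  shows "(\<Sum>i<k. gdist adj (a i) (b i)) \<le> (\<Sum>i<k. gdist adj (a (Suc i mod k)) (b i))"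
proof (cases "k = 0")
  case False
  then have "0 < k" by simp
  have cpl: "coupling \<mu> \<nu> \<pi>" using opt by (simp add: opt_coupling_def)
  define \<delta> where "\<delta> = Min ((\<lambda>i. \<pi> (a i) (b i)) ` {..<k})"
  have "0 < \<delta>" unfolding \<delta>_def using \<open>0 < k\<close> pos by (subst Min_gr_iff) auto
  have \<delta>_le: "\<delta> \<le> \<pi> (a i) (b i)" if "i < k" for i
    unfolding \<delta>_def using that by (intro Min_le) auto
  define \<epsilon> where "\<epsilon> = \<delta> / real k"
  have "0 < \<epsilon>" unfolding \<epsilon>_def using \<open>0 < \<delta>\<close> \<open>0 < k\<close> by simp
  have "0 \<le> \<pi> x y + \<epsilon> * cyclic_exchange k a b x y" for x y
  proof (cases "\<exists>j<k. x = a j \<and> y = b j")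
    case True
    then have "\<delta> \<le> \<pi> x y" using \<delta>_le by blast
    moreover have "- \<delta> \<le> \<epsilon> * cyclic_exchange k a b x y"
      using mult_left_mono[OF cyclic_exchange_ge[of k a b x y], of \<epsilon>] \<open>0 < \<epsilon>\<close> \<open>0 < k\<close>
      unfolding \<epsilon>_def by simp
    ultimately show ?thesis by linarith
  next
    case False
    then have "0 \<le> cyclic_exchange k a b x y" by (intro cyclic_exchange_nonneg) blast
    then show ?thesis using cpl \<open>0 < \<epsilon>\<close> unfolding coupling_def by simp
  qed
  note perturbed = cyclic_exchange_perturbation[OF cpl pos this]
  have "tcost adj \<pi> \<le> tcost adj (\<lambda>x y. \<pi> x y + \<epsilon> * cyclic_exchange k a b x y)"
    using opt perturbed(1) by (simp add: opt_coupling_def)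
  then have "0 \<le> (\<Sum>i<k. real (gdist adj (a (Suc i mod k)) (b i)) - real (gdist adj (a i) (b i)))"
    using perturbed(2) \<open>0 < \<epsilon>\<close> by (simp add: zero_le_mult_iff)
  then have "real (\<Sum>i<k. gdist adj (a i) (b i)) \<le> real (\<Sum>i<k. gdist adj (a (Suc i mod k)) (b i))"
    by (simp add: sum_subtractf)
  then show ?thesis by linarith
qed simp

lemma Csupp_cyclically_monotone:
  assumes "\<And>i. i < k \<Longrightarrow> (a i, b i) \<in> Csupp adj \<mu> \<nu>"
  shows "(\<Sum>i<k. gdist adj (a i) (b i)) \<le> (\<Sum>i<k. gdist adj (a (Suc i mod k)) (b i))"
proof (cases "k = 0")
  case False
  have "\<forall>i\<in>{..<k}. \<exists>\<pi>. opt_coupling adj \<mu> \<nu> \<pi> \<and> 0 < \<pi> (a i) (b i)"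
    using assms unfolding Csupp_def by blast
  from bchoice[OF this] obtain \<pi>s
    where "\<forall>i\<in>{..<k}. opt_coupling adj \<mu> \<nu> (\<pi>s i) \<and> 0 < \<pi>s i (a i) (b i)" ..
  then have opt: "\<And>i. i < k \<Longrightarrow> opt_coupling adj \<mu> \<nu> (\<pi>s i)"
    and pos: "\<And>i. i < k \<Longrightarrow> 0 < \<pi>s i (a i) (b i)" by auto
  have nonneg: "0 \<le> \<pi>s j x y" if "j < k" for j x y
    using opt[OF that] unfolding opt_coupling_def coupling_def by blast
  have "0 < (\<Sum>j<k. \<pi>s j (a i) (b i)) / real k" if "i < k" for i
  proof -
    have "\<pi>s i (a i) (b i) \<le> (\<Sum>j<k. \<pi>s j (a i) (b i))"
      using that by (intro member_le_sum) (simp_all add: nonneg)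
    then show ?thesis using pos[OF that] that by simp
  qed
  with False show ?thesis
    by (intro opt_coupling_cyclically_monotone[OF opt_coupling_average[where \<pi>s=\<pi>s, OF _ opt]])
      simp_all
qed simp

section \<open>The \<open>W\<^sub>1\<close>-orientation is graded\<close>

lemma w1_arrow_adj: "w1_arrow adj \<mu> \<nu> x y \<Longrightarrow> adj x y"
  by (simp add: w1_arrow_def)

lemma w1_arrow_on_optimal_geodesic:
  assumes "graph_connected adj" "w1_arrow adj \<mu> \<nu> x y"
  shows "\<exists>ab\<in>Csupp adj \<mu> \<nu>.
    gdist adj (fst ab) (snd ab) = gdist adj (fst ab) x + 1 + gdist adj y (snd ab)"
proof -
  obtain \<gamma> k where \<gamma>: "geodesic adj \<gamma>" "(hd \<gamma>, last \<gamma>) \<in> Csupp adj \<mu> \<nu>"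
    "Suc k < length \<gamma>" "\<gamma> ! k = x" "\<gamma> ! Suc k = y"
    using assms(2) unfolding w1_arrow_def by blast
  then have "gdist adj (hd \<gamma>) (last \<gamma>) = gdist adj (hd \<gamma>) x + 1 + gdist adj y (last \<gamma>)"
    using geodesic_through_edge[OF assms(1) \<gamma>(1,3)] by simp
  then show ?thesis using \<gamma>(2) by force
qed

lemma gdist_sum_rotate_le:
  assumes conn: "graph_connected adj"
  shows "(\<Sum>i<k. gdist adj (a (Suc i mod k)) (b i))
    \<le> (\<Sum>i<k. gdist adj (a i) (z i)) + gdist adj (z 0) (z k) + (\<Sum>i<k. gdist adj (z (Suc i)) (b i))"
proof -
  define \<sigma> where "\<sigma> i = Suc i mod k" for i
  have "(\<Sum>i<k. gdist adj (a (\<sigma> i)) (b i)) \<le> (\<Sum>i<k. gdist adj (a (\<sigma> i)) (z (\<sigma> i))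
      + gdist adj (z (\<sigma> i)) (z (Suc i)) + gdist adj (z (Suc i)) (b i))"
  proof (rule sum_mono)
    fix i
    show "gdist adj (a (\<sigma> i)) (b i) \<le> gdist adj (a (\<sigma> i)) (z (\<sigma> i))
        + gdist adj (z (\<sigma> i)) (z (Suc i)) + gdist adj (z (Suc i)) (b i)"
      using gdist_triangle[OF conn, of "a (\<sigma> i)" "b i" "z (\<sigma> i)"]
        gdist_triangle[OF conn, of "z (\<sigma> i)" "b i" "z (Suc i)"] by linarith
  qed
  moreover have "(\<Sum>i<k. gdist adj (a (\<sigma> i)) (z (\<sigma> i))) = (\<Sum>i<k. gdist adj (a i) (z i))"
    unfolding \<sigma>_def by (rule sum_lessThan_rotate)
  moreover have "(\<Sum>i<k. gdist adj (z (\<sigma> i)) (z (Suc i))) = gdist adj (z 0) (z k)"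
  proof (cases k)
    case (Suc m)
    have "(\<Sum>i<m. gdist adj (z (\<sigma> i)) (z (Suc i))) = 0"
      unfolding \<sigma>_def Suc by (intro sum.neutral) simp
    moreover have "\<sigma> m = 0" unfolding \<sigma>_def Suc by simp
    ultimately show ?thesis using Suc by simp
  qed simp
  ultimately show ?thesis unfolding \<sigma>_def sum.distrib by simp
qed

text \<open>Each arrow \<open>p\<^sub>i \<rightarrow> p\<^sub>i\<^sub>+\<^sub>1\<close> of an oriented path lies on a geodesic from \<open>a\<^sub>i\<close> to
  \<open>b\<^sub>i\<close> with \<open>(a\<^sub>i, b\<^sub>i)\<close> in the optimal support. Comparing the cyclic rearrangement
  \<open>(a\<^sub>i\<^sub>+\<^sub>1, b\<^sub>i)\<close>, bounded through the triangle inequality, with cyclical monotonicity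
  leaves \<open>k \<le> d(p\<^sub>0, p\<^sub>k)\<close>.\<close>

lemma w1_oriented_path_gdist:
  assumes conn: "graph_connected adj" and op: "oriented_path (w1_arrow adj \<mu> \<nu>) p"
  shows "gdist adj (hd p) (last p) = length p - 1"
proof -
  have wp: "walk (w1_arrow adj \<mu> \<nu>) p" using op by (simp add: oriented_path_eq_walk)
  then have "walk adj p" using walk_mono w1_arrow_adj by metis
  then have le: "gdist adj (hd p) (last p) \<le> length p - 1" by (rule gdist_le_length)
  define k where "k = length p - 1"
  have len: "length p = Suc k" using walk_nonempty[OF wp] unfolding k_def by simp
  have ends: "hd p = p ! 0" "last p = p ! k"
    using walk_nonempty[OF wp] len by (simp_all add: hd_conv_nth last_conv_nth)
  have "\<forall>i\<in>{..<k}. \<exists>ab. ab \<in> Csupp adj \<mu> \<nu> \<and>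
      gdist adj (fst ab) (snd ab) = gdist adj (fst ab) (p ! i) + 1 + gdist adj (p ! Suc i) (snd ab)"
    using wp len w1_arrow_on_optimal_geodesic[OF conn] unfolding walk_def by (simp add: Bex_def)
  from bchoice[OF this] obtain ab where ab: "\<forall>i\<in>{..<k}. ab i \<in> Csupp adj \<mu> \<nu> \<and>
      gdist adj (fst (ab i)) (snd (ab i))
        = gdist adj (fst (ab i)) (p ! i) + 1 + gdist adj (p ! Suc i) (snd (ab i))"
    by blast
  define a where "a i = fst (ab i)" for i
  define b where "b i = snd (ab i)" for i
  have "(\<Sum>i<k. gdist adj (a i) (p ! i)) + k + (\<Sum>i<k. gdist adj (p ! Suc i) (b i))
      = (\<Sum>i<k. gdist adj (a i) (p ! i) + 1 + gdist adj (p ! Suc i) (b i))"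
    by (simp only: sum.distrib) simp
  also have "\<dots> = (\<Sum>i<k. gdist adj (a i) (b i))"
    using ab unfolding a_def b_def by (intro sum.cong) auto
  also have "\<dots> \<le> (\<Sum>i<k. gdist adj (a (Suc i mod k)) (b i))"
    unfolding a_def b_def using ab by (intro Csupp_cyclically_monotone[where \<mu>=\<mu> and \<nu>=\<nu>]) simp
  also have "\<dots> \<le> (\<Sum>i<k. gdist adj (a i) (p ! i)) + gdist adj (p ! 0) (p ! k)
                  + (\<Sum>i<k. gdist adj (p ! Suc i) (b i))"
    by (rule gdist_sum_rotate_le[OF conn])
  finally have "k \<le> gdist adj (p ! 0) (p ! k)" by linarith
  then show ?thesis using le len ends by simp
qed

lemma finite_w1_arrows:
  assumes lf: "locally_finite adj" and "prob_dist \<mu>" "prob_dist \<nu>"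
  shows "finite {(x, y). w1_arrow adj \<mu> \<nu> x y}"
proof -
  have "Csupp adj \<mu> \<nu> \<subseteq> {x. \<mu> x \<noteq> 0} \<times> {y. \<nu> y \<noteq> 0}"
    unfolding Csupp_def opt_coupling_def using coupling_marginals_pos by fastforce
  then have finC: "finite (Csupp adj \<mu> \<nu>)"
    using assms(2,3) unfolding prob_dist_def by (meson finite_SigmaI finite_subset)
  define G where "G a b = {p. walk adj p \<and> hd p = a \<and> length p = Suc (gdist adj a b)}" for a b
  have finG: "finite (G a b)" for a b
    unfolding G_def by (rule finite_walks_from[OF lf])
  have "{(x, y). w1_arrow adj \<mu> \<nu> x y} \<subseteq> (\<Union>(a, b)\<in>Csupp adj \<mu> \<nu>. \<Union>\<gamma>\<in>G a b. set \<gamma> \<times> set \<gamma>)"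
  proof clarify
    fix x y assume "w1_arrow adj \<mu> \<nu> x y"
    then obtain \<gamma> k where \<gamma>: "geodesic adj \<gamma>" "(hd \<gamma>, last \<gamma>) \<in> Csupp adj \<mu> \<nu>"
      "Suc k < length \<gamma>" "\<gamma> ! k = x" "\<gamma> ! Suc k = y"
      unfolding w1_arrow_def by blast
    then have "\<gamma> \<in> G (hd \<gamma>) (last \<gamma>)" "x \<in> set \<gamma>" "y \<in> set \<gamma>"
      unfolding G_def geodesic_def by (auto dest: nth_mem)
    then show "(x, y) \<in> (\<Union>(a, b)\<in>Csupp adj \<mu> \<nu>. \<Union>\<gamma>\<in>G a b. set \<gamma> \<times> set \<gamma>)"
      using \<gamma>(2) by blast
  qed
  moreover have "finite (\<Union>(a, b)\<in>Csupp adj \<mu> \<nu>. \<Union>\<gamma>\<in>G a b. set \<gamma> \<times> set \<gamma>)"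
    using finC finG by auto
  ultimately show ?thesis by (rule finite_subset)
qed

lemma oriented_path_single [simp]: "oriented_path ar [x]"
  by (simp add: oriented_path_eq_walk)

lemma oriented_path_nonempty: "oriented_path ar p \<Longrightarrow> p \<noteq> []"
  by (simp add: oriented_path_eq_walk walk_nonempty)

lemma oriented_path_Cons:
  "p \<noteq> [] \<Longrightarrow> oriented_path ar (x # p) \<longleftrightarrow> ar x (hd p) \<and> oriented_path ar p"
  by (simp add: oriented_path_eq_walk walk_Cons)

lemma oriented_path_glue:
  "oriented_path ar p \<Longrightarrow> oriented_path ar q \<Longrightarrow> last p = hd q \<Longrightarrow> oriented_path ar (p @ tl q)"
  by (simp add: oriented_path_eq_walk walk_append)

lemma oriented_path_snoc:
  "oriented_path ar p \<Longrightarrow> ar (last p) y \<Longrightarrow> oriented_path ar (p @ [y])"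
  using oriented_path_glue[of ar p "[last p, y]"] by (simp add: oriented_path_Cons)

lemma oriented_path_take: "oriented_path ar p \<Longrightarrow> 0 < n \<Longrightarrow> oriented_path ar (take n p)"
  by (simp add: oriented_path_eq_walk walk_take)

lemma oriented_path_drop: "oriented_path ar p \<Longrightarrow> n < length p \<Longrightarrow> oriented_path ar (drop n p)"
  by (simp add: oriented_path_eq_walk walk_drop)

lemma oriented_path_nth: "oriented_path ar p \<Longrightarrow> Suc i < length p \<Longrightarrow> ar (p ! i) (p ! Suc i)"
  by (simp add: oriented_path_def)

lemma oriented_path_segment:
  assumes "oriented_path ar p" "i \<le> j" "j < length p"
  shows "oriented_path ar (take (Suc (j - i)) (drop i p))"
    and "hd (take (Suc (j - i)) (drop i p)) = p ! i"
    and "last (take (Suc (j - i)) (drop i p)) = p ! j"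
    and "length (take (Suc (j - i)) (drop i p)) = Suc (j - i)"
proof -
  show "oriented_path ar (take (Suc (j - i)) (drop i p))"
    using assms by (intro oriented_path_take oriented_path_drop) auto
qed (use assms in \<open>auto simp: hd_drop_conv_nth last_conv_nth\<close>)

lemma oriented_path_short:
  assumes "oriented_path ar p" "\<not> 2 \<le> length p"
  obtains v where "p = [v]"
  using assms oriented_path_nonempty[of ar p] by (cases p) (auto simp: Suc_le_eq)

lemma oriented_path_first_arrow: "oriented_path ar p \<Longrightarrow> 2 \<le> length p \<Longrightarrow> ar (hd p) (p ! 1)"
  using oriented_path_nth[of ar p 0] by (cases p) (auto simp: Suc_le_eq)

lemma oriented_path_last_arrow:
  assumes "oriented_path ar p" "2 \<le> length p"
  shows "ar (p ! (length p - 2)) (last p)"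
proof -
  have "Suc (length p - 2) = length p - 1" "length p - 1 < length p" using assms(2) by auto
  then show ?thesis
    using oriented_path_nth[OF assms(1), of "length p - 2"] oriented_path_nonempty[OF assms(1)]
    by (simp add: last_conv_nth)
qed

text \<open>A finite orientation whose oriented paths have their length fixed by their endpoints;
  by \<open>w1_oriented_path_gdist\<close> the \<open>W\<^sub>1\<close>-orientation is one, with \<open>d\<close> the graph distance.\<close>

locale graded_orientation =
  fixes ar :: "'v \<Rightarrow> 'v \<Rightarrow> bool" and d :: "'v \<Rightarrow> 'v \<Rightarrow> nat"
  assumes finite_arrows: "finite {(x, y). ar x y}"
    and length_oriented_path: "oriented_path ar p \<Longrightarrow> d (hd p) (last p) = length p - 1"
begin

lemma oriented_path_distinct:
  assumes "oriented_path ar p"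
  shows "distinct p"
proof (rule ccontr)
  assume "\<not> distinct p"
  then obtain i j where "i < j" "j < length p" "p ! i = p ! j"
    by (metis distinct_conv_nth linorder_neqE_nat)
  moreover have "d (p ! i) (p ! i) = 0"
    using length_oriented_path[of "[p ! i]"] by simp
  ultimately show False
    using length_oriented_path[OF oriented_path_segment(1)[OF assms, of i j]]
      oriented_path_segment(2-4)[OF assms, of i j] by simp
qed

lemma oriented_path_arrow_length:
  assumes "ar x y" "oriented_path ar p" "hd p = x" "last p = y"
  shows "length p = 2"
proof -
  have "d x y = 1"
    using length_oriented_path[of "[x, y]"] assms(1) by (simp add: oriented_path_Cons)
  then show ?thesis
    using length_oriented_path[OF assms(2)] assms(3,4) oriented_path_nonempty[OF assms(2)]
    by (cases p) auto
qed

lemma finite_oriented_paths_through: "finite {p. oriented_path ar p \<and> v \<in> set p}"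
proof -
  define V where "V = fst ` {(x, y). ar x y} \<union> snd ` {(x, y). ar x y}"
  have finV: "finite V" unfolding V_def using finite_arrows by simp
  have long: "set p \<subseteq> V" if "oriented_path ar p" "2 \<le> length p" for p
  proof
    fix u assume "u \<in> set p"
    then obtain i where i: "i < length p" "p ! i = u" by (metis in_set_conv_nth)
    show "u \<in> V"
    proof (cases "Suc i < length p")
      case True
      then have "ar u (p ! Suc i)" using oriented_path_nth[OF that(1)] i by blast
      then show ?thesis unfolding V_def by (force intro: rev_image_eqI)
    next
      case False
      then have "Suc (i - 1) = i" "Suc (i - 1) < length p" using i that(2) by auto
      then have "ar (p ! (i - 1)) u" using oriented_path_nth[OF that(1), of "i - 1"] i by simp
      then show ?thesis unfolding V_def by (force intro: rev_image_eqI)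
    qed
  qed
  let ?L = "{p. set p \<subseteq> V \<and> length p \<le> card V}"
  have "p \<in> insert [v] ?L" if "oriented_path ar p" "v \<in> set p" for p
  proof (cases "2 \<le> length p")
    case True
    then have "set p \<subseteq> V" using long that(1) by blast
    moreover have "length p \<le> card V"
      using card_mono[OF finV \<open>set p \<subseteq> V\<close>] distinct_card[OF oriented_path_distinct[OF that(1)]]
      by simp
    ultimately show ?thesis by simp
  next
    case False
    with that show ?thesis by (auto elim: oriented_path_short)
  qed
  then have "{p. oriented_path ar p \<and> v \<in> set p} \<subseteq> insert [v] ?L" by blast
  then show ?thesis
    using finite_lists_length_le[OF finV] by (meson finite.insertI finite_subset)
qed

lemma finite_oriented_paths_from: "finite {p. oriented_path ar p \<and> hd p = v}"
  by (rule finite_subset[OF _ finite_oriented_paths_through[of v]])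
    (auto dest: oriented_path_nonempty)

lemma finite_oriented_paths_to: "finite {p. oriented_path ar p \<and> last p = v}"
  by (rule finite_subset[OF _ finite_oriented_paths_through[of v]])
    (auto dest: oriented_path_nonempty)

end

section \<open>The path weights \<open>C\<^sub>\<gamma>\<close>\<close>

lemma Cpath_single [simp]: "Cpath f g [x] = f x"
  by (simp add: Cpath_def)

lemma Cpath_pair [simp]: "Cpath f g [x, y] = g x y"
  by (simp add: Cpath_def)

lemma Cpath_frac:
  assumes "length p \<ge> 2"
  shows "Cpath f g p = (\<Prod>i<length p - 1. g (p ! i) (p ! Suc i)) / (\<Prod>j\<in>{1..length p - 2}. f (p ! j))"
proof (cases "length p = 2")
  case True
  then show ?thesis by (simp add: Cpath_def)
next
  case False
  then show ?thesis using assms by (simp add: Cpath_def)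
qed

lemma Cpath_Cons:
  assumes len: "length p \<ge> 2"
  shows "Cpath f g (x # p) = g x (hd p) * Cpath f g p / f (hd p)"
proof -
  obtain m where m: "length p = Suc (Suc m)" using len by (metis add_2_eq_Suc le_iff_add)
  have ne: "p \<noteq> []" using m by auto
  have num: "(\<Prod>i<length (x # p) - 1. g ((x # p) ! i) ((x # p) ! Suc i))
      = g x (hd p) * (\<Prod>i<length p - 1. g (p ! i) (p ! Suc i))"
  proof -
    have "(\<Prod>i<length (x # p) - 1. g ((x # p) ! i) ((x # p) ! Suc i))
        = (\<Prod>i<Suc (length p - 1). g ((x # p) ! i) ((x # p) ! Suc i))"
      using m by simp
    also have "\<dots> = g ((x # p) ! 0) ((x # p) ! Suc 0)
        * (\<Prod>i<length p - 1. g ((x # p) ! Suc i) ((x # p) ! Suc (Suc i)))"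
      by (rule prod.lessThan_Suc_shift)
    also have "\<dots> = g x (hd p) * (\<Prod>i<length p - 1. g (p ! i) (p ! Suc i))"
      using ne by (simp add: hd_conv_nth)
    finally show ?thesis .
  qed
  have den: "(\<Prod>j\<in>{1..length (x # p) - 2}. f ((x # p) ! j))
      = f (hd p) * (\<Prod>j\<in>{1..length p - 2}. f (p ! j))"
  proof -
    have "(\<Prod>j\<in>{1..length (x # p) - 2}. f ((x # p) ! j)) = (\<Prod>j\<in>{Suc 0..Suc m}. f ((x # p) ! j))"
      using m by simp
    also have "\<dots> = (\<Prod>j\<in>{0..m}. f ((x # p) ! Suc j))" by (rule prod.shift_bounds_cl_Suc_ivl)
    also have "\<dots> = (\<Prod>j\<in>{0..m}. f (p ! j))" by simp
    also have "\<dots> = f (p ! 0) * (\<Prod>j\<in>{Suc 0..m}. f (p ! j))" by (rule prod.atLeast_Suc_atMost) simp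
    also have "\<dots> = f (hd p) * (\<Prod>j\<in>{1..length p - 2}. f (p ! j))"
      using m ne by (simp add: hd_conv_nth)
    finally show ?thesis .
  qed
  have "Cpath f g (x # p) = (\<Prod>i<length (x # p) - 1. g ((x # p) ! i) ((x # p) ! Suc i))
      / (\<Prod>j\<in>{1..length (x # p) - 2}. f ((x # p) ! j))"
    by (rule Cpath_frac) (use len in simp)
  then show ?thesis unfolding num den Cpath_frac[OF len] by simp
qed

lemma Cpath_glue:
  assumes "length \<alpha> \<ge> 2" "length \<beta> \<ge> 2" "last \<alpha> = hd \<beta>"
  shows "Cpath f g (\<alpha> @ tl \<beta>) = Cpath f g \<alpha> * Cpath f g \<beta> / f (hd \<beta>)"
  using assms
proof (induction \<alpha>)
  case Nil then show ?case by simp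
next
  case (Cons a \<alpha>')
  show ?case
  proof (cases "length \<alpha>' = 1")
    case True
    then obtain v where v: "\<alpha>' = [v]" by (metis One_nat_def length_0_conv length_Suc_conv)
    have vb: "v = hd \<beta>" using Cons.prems v by simp
    have "(a # \<alpha>') @ tl \<beta> = a # \<beta>" using v vb Cons.prems by (cases \<beta>) auto
    then show ?thesis using Cpath_Cons[OF Cons.prems(2), of f g a] v vb by simp
  next
    case False
    then have l2: "length \<alpha>' \<ge> 2" using Cons.prems(1) by simp
    have ne: "\<alpha>' \<noteq> []" using l2 by auto
    have ih: "Cpath f g (\<alpha>' @ tl \<beta>) = Cpath f g \<alpha>' * Cpath f g \<beta> / f (hd \<beta>)"
      using Cons.IH[OF l2 Cons.prems(2)] Cons.prems(3) ne by simp
    have l2': "length (\<alpha>' @ tl \<beta>) \<ge> 2" using l2 by simp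
    have "Cpath f g ((a # \<alpha>') @ tl \<beta>) = g a (hd \<alpha>') * Cpath f g (\<alpha>' @ tl \<beta>) / f (hd \<alpha>')"
      using Cpath_Cons[OF l2', of f g a] ne by simp
    also have "\<dots> = (g a (hd \<alpha>') * Cpath f g \<alpha>' / f (hd \<alpha>')) * Cpath f g \<beta> / f (hd \<beta>)"
      unfolding ih by (simp add: ac_simps)
    also have "\<dots> = Cpath f g (a # \<alpha>') * Cpath f g \<beta> / f (hd \<beta>)"
      using Cpath_Cons[OF l2, of f g a] by simp
    finally show ?thesis .
  qed
qed

section \<open>Time derivative of the path weights\<close>

locale graded_flow = graded_orientation ar d for ar :: "'v \<Rightarrow> 'v \<Rightarrow> bool" and d +
  fixes f :: "real \<Rightarrow> 'v \<Rightarrow> real" and g :: "real \<Rightarrow> 'v \<Rightarrow> 'v \<Rightarrow> real"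
    and h :: "real \<Rightarrow> 'v \<Rightarrow> 'v \<Rightarrow> 'v \<Rightarrow> real"
  assumes deriv_f: "t \<in> {0..1} \<Longrightarrow>
      ((\<lambda>s. f s x) has_real_derivative - nabla_g ar (g t) x) (at t within {0..1})"
    and deriv_g: "ar x y \<Longrightarrow> t \<in> {0..1} \<Longrightarrow>
      ((\<lambda>s. g s x y) has_real_derivative - nabla_h ar (h t) x y) (at t within {0..1})"
    and g_pos: "ar x y \<Longrightarrow> t \<in> {0..1} \<Longrightarrow> 0 < g t x y"
    and f_nonneg: "t \<in> {0..1} \<Longrightarrow> 0 \<le> f t x"
    and f_h_eq: "ar x0 x1 \<Longrightarrow> ar x1 x2 \<Longrightarrow> t \<in> {0..1} \<Longrightarrow>
      f t x1 * h t x0 x1 x2 = g t x0 x1 * g t x1 x2"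
begin

abbreviation C :: "real \<Rightarrow> 'v list \<Rightarrow> real" where
  "C t p \<equiv> Cpath (f t) (g t) p"

definition Cpath_flux :: "real \<Rightarrow> 'v list \<Rightarrow> real" where
  "Cpath_flux t p =
     (\<Sum>x0\<in>{x0. ar x0 (hd p)}. C t (x0 # p)) - (\<Sum>x3\<in>{x3. ar (last p) x3}. C t (p @ [x3]))"

lemma f_pos: "ar x0 x1 \<Longrightarrow> ar x1 x2 \<Longrightarrow> t \<in> {0..1} \<Longrightarrow> 0 < f t x1"
  using f_h_eq[of x0 x1 x2 t] g_pos[of x0 x1 t] g_pos[of x1 x2 t] f_nonneg[of t x1]
  by (metis less_eq_real_def mult_eq_0_iff mult_pos_pos)

lemma h_eq: "ar x0 x1 \<Longrightarrow> ar x1 x2 \<Longrightarrow> t \<in> {0..1} \<Longrightarrow> h t x0 x1 x2 = g t x0 x1 * g t x1 x2 / f t x1"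
  using f_h_eq[of x0 x1 x2 t] f_pos[of x0 x1 x2 t] by (simp add: field_simps)

lemma Cpath_flux_single: "Cpath_flux t [x] = - nabla_g ar (g t) x"
  unfolding Cpath_flux_def nabla_g_def by simp

lemma Cpath_flux_pair:
  assumes "ar x y" "t \<in> {0..1}"
  shows "Cpath_flux t [x, y] = - nabla_h ar (h t) x y"
proof -
  have "(\<Sum>x0\<in>{x0. ar x0 x}. C t [x0, x, y]) = (\<Sum>x0\<in>{x0. ar x0 x}. h t x0 x y)"
    by (rule sum.cong[OF refl]) (use h_eq[OF _ assms] Cpath_Cons[of "[x, y]"] in simp)
  moreover have "(\<Sum>x3\<in>{x3. ar y x3}. C t [x, y, x3]) = (\<Sum>x3\<in>{x3. ar y x3}. h t x y x3)"
    by (rule sum.cong[OF refl])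
      (use h_eq[OF assms(1) _ assms(2)] Cpath_Cons[of "[y, x3]" for x3] in simp)
  ultimately show ?thesis unfolding Cpath_flux_def nabla_h_def by simp
qed

text \<open>The right-hand side is the quotient rule applied to \<open>C t (x # p) = g t x y * C t p / f t y\<close>,
  with the continuity equations substituted for the derivatives of \<open>g\<close> and \<open>f\<close>.\<close>

lemma Cpath_flux_Cons:
  assumes "ar x y" "oriented_path ar p" "hd p = y" "2 \<le> length p" "t \<in> {0..1}"
  shows "Cpath_flux t (x # p) = (g t x y * Cpath_flux t p - nabla_h ar (h t) x y * C t p) / f t y
    + g t x y * C t p * nabla_g ar (g t) y / (f t y)\<^sup>2"
proof -
  have "p \<noteq> []" using assms(4) by auto
  have "ar y (p ! 1)" using oriented_path_first_arrow[OF assms(2,4)] assms(3) by simp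
  then have "f t y \<noteq> 0" using f_pos[OF assms(1) _ assms(5)] by fastforce
  define G Cp F where "G = g t x y" and "Cp = C t p" and "F = f t y"
  define In where "In = (\<Sum>w\<in>{w. ar w y}. g t w y)"
  define Out where "Out = (\<Sum>z\<in>{z. ar y z}. g t y z)"
  define Hin where "Hin = (\<Sum>x0\<in>{x0. ar x0 x}. h t x0 x y)"
  define Cout where "Cout = (\<Sum>x3\<in>{x3. ar (last p) x3}. C t (p @ [x3]))"
  have "(\<Sum>z\<in>{z. ar y z}. h t x y z) = G * Out / F"
    unfolding Out_def G_def F_def sum_divide_distrib sum_distrib_left
    by (rule sum.cong[OF refl]) (use h_eq[OF assms(1) _ assms(5)] in simp)
  then have nabla_h_xy: "nabla_h ar (h t) x y = G * Out / F - Hin"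
    unfolding nabla_h_def Hin_def by simp
  have nabla_g_y: "nabla_g ar (g t) y = Out - In"
    unfolding nabla_g_def Out_def In_def ..
  have "(\<Sum>w\<in>{w. ar w y}. C t (w # p)) = In * Cp / F"
    unfolding In_def Cp_def F_def sum_divide_distrib sum_distrib_right
    by (rule sum.cong[OF refl]) (use Cpath_Cons[OF assms(4)] assms(3) in simp)
  then have flux_p: "Cpath_flux t p = In * Cp / F - Cout"
    unfolding Cpath_flux_def Cout_def using assms(3) by simp
  have "(\<Sum>x0\<in>{x0. ar x0 x}. C t (x0 # x # p)) = Hin * Cp / F"
    unfolding Hin_def Cp_def F_def sum_divide_distrib sum_distrib_right
  proof (rule sum.cong[OF refl])
    fix x0 assume "x0 \<in> {x0. ar x0 x}"
    then show "C t (x0 # x # p) = h t x0 x y * C t p / f t y"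
      using Cpath_Cons[of "x # p" "f t" "g t" x0] Cpath_Cons[OF assms(4), of "f t" "g t" x]
        assms h_eq[OF _ assms(1) assms(5), of x0] by (simp add: ac_simps)
  qed
  moreover have "(\<Sum>x3\<in>{x3. ar (last p) x3}. C t ((x # p) @ [x3])) = G * Cout / F"
    unfolding Cout_def G_def F_def sum_divide_distrib sum_distrib_left
    by (rule sum.cong[OF refl])
      (use Cpath_Cons[of "p @ [_]" "f t" "g t" x] assms(3,4) \<open>p \<noteq> []\<close> in simp)
  ultimately have flux_xp: "Cpath_flux t (x # p) = Hin * Cp / F - G * Cout / F"
    unfolding Cpath_flux_def using assms(3) \<open>p \<noteq> []\<close> by simp
  show ?thesis
    unfolding flux_xp flux_p nabla_h_xy nabla_g_y
      G_def[symmetric] Cp_def[symmetric] F_def[symmetric]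
    using \<open>f t y \<noteq> 0\<close> unfolding F_def[symmetric] by (simp add: field_simps power2_eq_square)
qed

lemma has_real_derivative_Cpath:
  assumes "oriented_path ar p" "t \<in> {0..1}"
  shows "((\<lambda>s. C s p) has_real_derivative Cpath_flux t p) (at t within {0..1})"
  using assms(1)
proof (induction p)
  case (Cons x p)
  consider "p = []" | y where "p = [y]" | "2 \<le> length p"
    by (cases p rule: remdups_adj.cases) auto
  then show ?case
  proof cases
    case 1
    then show ?thesis using deriv_f[OF assms(2)] by (simp add: Cpath_flux_single)
  next
    case 2
    then have "ar x y" using Cons.prems by (simp add: oriented_path_Cons)
    then show ?thesis using 2 deriv_g[OF _ assms(2)] Cpath_flux_pair[OF _ assms(2)] by simp
  next
    case 3
    define y where "y = hd p"
    have "p \<noteq> []" using 3 by auto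
    then have p: "oriented_path ar p" and xy: "ar x y"
      using Cons.prems oriented_path_Cons[of p ar x] unfolding y_def by auto
    have "ar y (p ! 1)" using oriented_path_first_arrow[OF p 3] unfolding y_def .
    then have "f t y \<noteq> 0" using f_pos[OF xy _ assms(2)] by fastforce
    have "(\<lambda>s. C s (x # p)) = (\<lambda>s. g s x y * C s p / f s y)"
      using Cpath_Cons[OF 3] unfolding y_def by simp
    moreover have "((\<lambda>s. g s x y * C s p / f s y) has_real_derivative
        ((- nabla_h ar (h t) x y * C t p + Cpath_flux t p * g t x y) * f t y
          - g t x y * C t p * - nabla_g ar (g t) y) / (f t y * f t y)) (at t within {0..1})"
      by (rule DERIV_divide[OF DERIV_mult[OF deriv_g[OF xy assms(2)] Cons.IH[OF p]]
            deriv_f[OF assms(2)]])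
        (use \<open>f t y \<noteq> 0\<close> in simp)
    moreover have "((- nabla_h ar (h t) x y * C t p + Cpath_flux t p * g t x y) * f t y
          - g t x y * C t p * - nabla_g ar (g t) y) / (f t y * f t y) = Cpath_flux t (x # p)"
      using Cpath_flux_Cons[OF xy p _ 3 assms(2)] \<open>f t y \<noteq> 0\<close> unfolding y_def
      by (simp add: field_simps power2_eq_square)
    ultimately show ?thesis by simp
  qed
qed (simp add: oriented_path_def)

lemma Cpath_pos:
  assumes "oriented_path ar p" "2 \<le> length p" "t \<in> {0..1}"
  shows "0 < C t p"
  using assms(1,2)
proof (induction p)
  case (Cons x p)
  then have "p \<noteq> []" by auto
  then have xp: "ar x (hd p)" and p: "oriented_path ar p"
    using Cons.prems(1) oriented_path_Cons[of p ar x] by auto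
  show ?case
  proof (cases "2 \<le> length p")
    case False
    then show ?thesis using g_pos[OF xp assms(3)] p by (auto elim: oriented_path_short)
  next
    case True
    then have "0 < f t (hd p)" using f_pos[OF xp oriented_path_first_arrow[OF p] assms(3)] by simp
    then show ?thesis
      using Cons.IH[OF p True] Cpath_Cons[OF True, of "f t" "g t" x] g_pos[OF xp assms(3)] by simp
  qed
qed simp

lemma Cpath_nonneg: "oriented_path ar p \<Longrightarrow> t \<in> {0..1} \<Longrightarrow> 0 \<le> C t p"
  using Cpath_pos[of p t] f_nonneg[of t] by (cases "2 \<le> length p") (auto elim: oriented_path_short)

lemma Cpath_extremal_const:
  assumes ex: "extremal_path ar p" and t: "t \<in> {0..1}"
  shows "C t p = C 0 p"
proof -
  have op: "oriented_path ar p" and hs: "hd p \<in> sources ar" and ls: "last p \<in> sinks ar"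
    using ex unfolding extremal_path_def by auto
  have "Cpath_flux s p = 0" for s
  proof -
    have e1: "{x0. ar x0 (hd p)} = {}" and e2: "{x3. ar (last p) x3} = {}"
      using hs ls unfolding sources_def sinks_def by auto
    show ?thesis unfolding Cpath_flux_def e1 e2 by simp
  qed
  then have "\<And>s. s \<in> {0..1} \<Longrightarrow> ((\<lambda>s. C s p) has_real_derivative 0) (at s within {0..1})"
    using has_real_derivative_Cpath[OF op] by metis
  then obtain c where "\<forall>s\<in>{0..1::real}. C s p = c"
    using has_field_derivative_zero_constant[of "{0..1::real}" "\<lambda>s. C s p"] by auto
  then show ?thesis using t by auto
qed

end

section \<open>Decomposing extremal paths\<close>

lemma finite_has_longest:
  assumes "finite A" "a \<in> A"
  shows "\<exists>p\<in>A. \<forall>q\<in>A. length q \<le> length p"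
proof -
  have "Max (length ` A) \<in> length ` A" using assms by (intro Max_in) auto
  then obtain p where "p \<in> A" "length p = Max (length ` A)" by auto
  moreover have "length q \<le> Max (length ` A)" if "q \<in> A" for q using assms(1) that by simp
  ultimately show ?thesis by metis
qed

lemma visits_in_order_single: "visits_in_order [z] p \<longleftrightarrow> z \<in> set p"
proof
  assume "visits_in_order [z] p"
  then obtain ks :: "nat list" where "length ks = 1" "ks ! 0 < length p" "p ! (ks ! 0) = z"
    unfolding visits_in_order_def by auto
  then show "z \<in> set p" by (metis nth_mem)
next
  assume "z \<in> set p"
  then obtain i where "i < length p" "p ! i = z" by (metis in_set_conv_nth)
  then show "visits_in_order [z] p" unfolding visits_in_order_def
    by (intro exI[where x="[i]"]) auto
qed

lemma visits_in_order_pair: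
  "visits_in_order [a, b] p \<longleftrightarrow> (\<exists>i j. i \<le> j \<and> j < length p \<and> p ! i = a \<and> p ! j = b)"
proof
  assume "visits_in_order [a, b] p"
  then obtain ks :: "nat list" where k: "length ks = length [a,b]" "sorted ks"
    "\<forall>i<length [a,b]. ks ! i < length p \<and> p ! (ks ! i) = [a,b] ! i"
    unfolding visits_in_order_def by blast
  have "length ks = Suc (Suc 0)" using k(1) by simp
  then obtain i j where "ks = [i, j]" by (auto simp: length_Suc_conv)
  then show "\<exists>i j. i \<le> j \<and> j < length p \<and> p ! i = a \<and> p ! j = b"
    using k by (intro exI[where x=i] exI[where x=j]) (auto dest: spec[where x=0] spec[where x=1])
next
  assume "\<exists>i j. i \<le> j \<and> j < length p \<and> p ! i = a \<and> p ! j = b"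
  then obtain i j where ij: "i \<le> j" "j < length p" "p ! i = a" "p ! j = b" by blast
  have "\<forall>k<length [a,b]. [i, j] ! k < length p \<and> p ! ([i, j] ! k) = [a, b] ! k"
    using ij by (auto simp: less_Suc_eq)
  then show "visits_in_order [a, b] p" unfolding visits_in_order_def
    using ij by (intro exI[where x="[i,j]"]) auto
qed

lemma append_eq_append_distinct:
  assumes "distinct (xs @ ys)" "xs @ ys = xs' @ ys'" "xs \<noteq> []" "xs' \<noteq> []" "last xs = last xs'"
  shows "xs = xs' \<and> ys = ys'"
proof -
  let ?l = "xs @ ys"
  have a: "?l ! (length xs - 1) = last xs" using assms(3) by (simp add: nth_append last_conv_nth)
  have b: "?l ! (length xs' - 1) = last xs'" using assms(2,4)
    by (simp add: nth_append last_conv_nth)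
  have l1: "length xs - 1 < length ?l" using assms(3) by (cases xs) auto
  have l2: "length xs' - 1 < length ?l" unfolding assms(2) using assms(4) by (cases xs') auto
  have "?l ! (length xs - 1) = ?l ! (length xs' - 1)" using a b assms(5) by simp
  then have "length xs - 1 = length xs' - 1" using nth_eq_iff_index_eq[OF assms(1) l1 l2] by simp
  then have "length xs = length xs'" using assms(3,4) by (cases xs; cases xs') auto
  then show ?thesis using assms(2) by simp
qed

context graded_orientation
begin

definition paths_to :: "'v \<Rightarrow> 'v list set" where
  "paths_to v = {p. oriented_path ar p \<and> hd p \<in> sources ar \<and> last p = v}"

definition paths_from :: "'v \<Rightarrow> 'v list set" where
  "paths_from v = {p. oriented_path ar p \<and> hd p = v \<and> last p \<in> sinks ar}"

definition extremal_through :: "'v list \<Rightarrow> 'v list set" where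
  "extremal_through zs = {p. extremal_path ar p \<and> visits_in_order zs p}"

lemma finite_extremal_through_single: "finite (extremal_through [v])"
  unfolding extremal_through_def extremal_path_def visits_in_order_single
  by (rule finite_subset[OF _ finite_oriented_paths_through[of v]]) blast

lemma paths_to_length: "p \<in> paths_to v \<Longrightarrow> v \<notin> sources ar \<Longrightarrow> 2 \<le> length p"
  unfolding paths_to_def by (cases "2 \<le> length p") (auto elim: oriented_path_short)

lemma paths_from_length: "p \<in> paths_from v \<Longrightarrow> v \<notin> sinks ar \<Longrightarrow> 2 \<le> length p"
  unfolding paths_from_def by (cases "2 \<le> length p") (auto elim: oriented_path_short)

lemma paths_to_source: "v \<in> sources ar \<Longrightarrow> paths_to v = {[v]}"
proof -
  assume v: "v \<in> sources ar"
  have "\<not> 2 \<le> length p" if "p \<in> paths_to v" for p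
    using that v oriented_path_last_arrow[of ar p] unfolding paths_to_def sources_def by blast
  moreover have "p = [v]" if "p \<in> paths_to v" "\<not> 2 \<le> length p" for p
    using that unfolding paths_to_def by (auto elim: oriented_path_short)
  ultimately show ?thesis using v unfolding paths_to_def by auto
qed

lemma paths_from_sink: "v \<in> sinks ar \<Longrightarrow> paths_from v = {[v]}"
proof -
  assume v: "v \<in> sinks ar"
  have "\<not> 2 \<le> length p" if "p \<in> paths_from v" for p
    using that v oriented_path_first_arrow[of ar p] unfolding paths_from_def sinks_def by blast
  moreover have "p = [v]" if "p \<in> paths_from v" "\<not> 2 \<le> length p" for p
    using that unfolding paths_from_def by (auto elim: oriented_path_short)
  ultimately show ?thesis using v unfolding paths_from_def by auto
qed

lemma extremal_path_split:
  assumes "extremal_path ar p" "k < length p"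
  shows "take (Suc k) p \<in> paths_to (p ! k)" and "drop k p \<in> paths_from (p ! k)"
proof -
  have "last (take (Suc k) p) = p ! k" using assms(2) by (simp add: take_Suc_conv_app_nth)
  moreover have "hd (take (Suc k) p) = hd p" using assms(2) by (cases p) auto
  ultimately show "take (Suc k) p \<in> paths_to (p ! k)" "drop k p \<in> paths_from (p ! k)"
    using assms oriented_path_take[of ar p "Suc k"] oriented_path_drop[of ar p k]
    by (auto simp: paths_to_def paths_from_def extremal_path_def hd_drop_conv_nth)
qed

lemma extremal_path_glue:
  assumes "\<alpha> \<in> paths_to v" "\<beta> \<in> paths_from v"
  shows "extremal_path ar (\<alpha> @ tl \<beta>)" and "v \<in> set (\<alpha> @ tl \<beta>)"
proof -
  have "\<alpha> \<noteq> []" "\<beta> \<noteq> []" "last \<alpha> = hd \<beta>"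
    using assms oriented_path_nonempty unfolding paths_to_def paths_from_def by auto
  moreover have "last (\<alpha> @ tl \<beta>) = last \<beta>"
    using \<open>\<beta> \<noteq> []\<close> \<open>last \<alpha> = hd \<beta>\<close> by (cases \<beta>) (auto simp: last_append)
  ultimately show "extremal_path ar (\<alpha> @ tl \<beta>)" "v \<in> set (\<alpha> @ tl \<beta>)"
    using assms oriented_path_glue[of ar \<alpha> \<beta>]
    by (auto simp: paths_to_def paths_from_def extremal_path_def)
qed

lemma extremal_path_append:
  assumes "ar x0 x" "\<alpha> \<in> paths_to x0" "\<gamma> \<in> paths_from x"
  shows "extremal_path ar (\<alpha> @ \<gamma>)"
proof -
  have "x0 # \<gamma> \<in> paths_from x0"
    using assms(1,3) oriented_path_nonempty oriented_path_Cons[of \<gamma> ar x0]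
    unfolding paths_from_def by auto
  from extremal_path_glue(1)[OF assms(2) this] show ?thesis by simp
qed

lemma extremal_through_single_eq:
  "extremal_through [v] = (\<lambda>(\<alpha>, \<beta>). \<alpha> @ tl \<beta>) ` (paths_to v \<times> paths_from v)"
proof (intro equalityI subsetI)
  fix p assume "p \<in> extremal_through [v]"
  then have p: "extremal_path ar p" and "v \<in> set p"
    unfolding extremal_through_def visits_in_order_single by auto
  then obtain k where k: "k < length p" "p ! k = v" by (metis in_set_conv_nth)
  have "p = take (Suc k) p @ tl (drop k p)" by (metis append_take_drop_id drop_Suc tl_drop)
  then show "p \<in> (\<lambda>(\<alpha>, \<beta>). \<alpha> @ tl \<beta>) ` (paths_to v \<times> paths_from v)"
    using extremal_path_split[OF p k(1)] k(2)
    by (force intro: image_eqI[where x="(take (Suc k) p, drop k p)"])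
next
  fix p assume "p \<in> (\<lambda>(\<alpha>, \<beta>). \<alpha> @ tl \<beta>) ` (paths_to v \<times> paths_from v)"
  then obtain \<alpha> \<beta> where "\<alpha> \<in> paths_to v" "\<beta> \<in> paths_from v" "p = \<alpha> @ tl \<beta>" by auto
  then show "p \<in> extremal_through [v]"
    using extremal_path_glue unfolding extremal_through_def visits_in_order_single by blast
qed

lemma inj_on_glue_paths: "inj_on (\<lambda>(\<alpha>, \<beta>). \<alpha> @ tl \<beta>) (paths_to v \<times> paths_from v)"
proof (rule inj_onI, clarify)
  fix \<alpha> \<beta> \<alpha>' \<beta>'
  assume a: "\<alpha> \<in> paths_to v" "\<beta> \<in> paths_from v" "\<alpha>' \<in> paths_to v" "\<beta>' \<in> paths_from v"
    and eq: "\<alpha> @ tl \<beta> = \<alpha>' @ tl \<beta>'"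
  have "distinct (\<alpha> @ tl \<beta>)"
    using extremal_path_glue(1)[OF a(1,2)] oriented_path_distinct unfolding extremal_path_def
    by blast
  moreover have "\<alpha> \<noteq> []" "\<alpha>' \<noteq> []" "last \<alpha> = last \<alpha>'" "\<beta> \<noteq> []" "\<beta>' \<noteq> []" "hd \<beta> = hd \<beta>'"
    using a oriented_path_nonempty unfolding paths_to_def paths_from_def by auto
  ultimately show "\<alpha> = \<alpha>' \<and> \<beta> = \<beta>'"
    using append_eq_append_distinct[OF _ eq] by (metis list.collapse)
qed

lemma extremal_through_arrow_eq:
  assumes "ar x0 x"
  shows "extremal_through [x0, x] = (\<lambda>(\<alpha>, \<gamma>). \<alpha> @ \<gamma>) ` (paths_to x0 \<times> paths_from x)"
proof (intro equalityI subsetI)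
  fix p assume "p \<in> extremal_through [x0, x]"
  then have p: "extremal_path ar p"
    and "\<exists>i j. i \<le> j \<and> j < length p \<and> p ! i = x0 \<and> p ! j = x"
    unfolding extremal_through_def visits_in_order_pair by auto
  then obtain i j where ij: "i \<le> j" "j < length p" "p ! i = x0" "p ! j = x" by blast
  have "oriented_path ar p" using p by (simp add: extremal_path_def)
  from oriented_path_arrow_length[OF assms oriented_path_segment(1)[OF this ij(1,2)]]
  have "j = Suc i"
    using oriented_path_segment(2-4)[OF \<open>oriented_path ar p\<close> ij(1,2)] ij by simp
  then have "take (Suc i) p \<in> paths_to x0" "drop (Suc i) p \<in> paths_from x"
    using extremal_path_split[OF p, of i] extremal_path_split[OF p, of "Suc i"] ij by auto
  moreover have "p = take (Suc i) p @ drop (Suc i) p" by simp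
  ultimately show "p \<in> (\<lambda>(\<alpha>, \<gamma>). \<alpha> @ \<gamma>) ` (paths_to x0 \<times> paths_from x)"
    by (force intro: image_eqI[where x="(take (Suc i) p, drop (Suc i) p)"])
next
  fix p assume "p \<in> (\<lambda>(\<alpha>, \<gamma>). \<alpha> @ \<gamma>) ` (paths_to x0 \<times> paths_from x)"
  then obtain \<alpha> \<gamma> where a: "\<alpha> \<in> paths_to x0" "\<gamma> \<in> paths_from x" and p: "p = \<alpha> @ \<gamma>" by auto
  have "\<alpha> \<noteq> []" "\<gamma> \<noteq> []" "last \<alpha> = x0" "hd \<gamma> = x"
    using a oriented_path_nonempty unfolding paths_to_def paths_from_def by auto
  then have "visits_in_order [x0, x] p"
    unfolding p visits_in_order_pair
    by (intro exI[where x="length \<alpha> - 1"] exI[where x="length \<alpha>"])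
      (auto simp: nth_append last_conv_nth hd_conv_nth)
  then show "p \<in> extremal_through [x0, x]"
    using extremal_path_append[OF assms a] p unfolding extremal_through_def by simp
qed

lemma inj_on_append_paths:
  assumes "ar x0 x"
  shows "inj_on (\<lambda>(\<alpha>, \<gamma>). \<alpha> @ \<gamma>) (paths_to x0 \<times> paths_from x)"
proof (rule inj_onI, clarify)
  fix \<alpha> \<gamma> \<alpha>' \<gamma>'
  assume a: "\<alpha> \<in> paths_to x0" "\<gamma> \<in> paths_from x" "\<alpha>' \<in> paths_to x0" "\<gamma>' \<in> paths_from x"
    and eq: "\<alpha> @ \<gamma> = \<alpha>' @ \<gamma>'"
  have "distinct (\<alpha> @ \<gamma>)"
    using extremal_path_append[OF assms a(1,2)] oriented_path_distinct unfolding extremal_path_def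
    by blast
  moreover have "\<alpha> \<noteq> []" "\<alpha>' \<noteq> []" "last \<alpha> = last \<alpha>'"
    using a oriented_path_nonempty unfolding paths_to_def by auto
  ultimately show "\<alpha> = \<alpha>' \<and> \<gamma> = \<gamma>'"
    using append_eq_append_distinct[OF _ eq] by blast
qed

lemma paths_from_nonempty: "\<exists>\<beta>. \<beta> \<in> paths_from v"
proof -
  from finite_has_longest[OF finite_oriented_paths_from[of v], of "[v]"]
  obtain p where p: "oriented_path ar p" "hd p = v"
    and longest: "\<And>q. oriented_path ar q \<Longrightarrow> hd q = v \<Longrightarrow> length q \<le> length p"
    by auto
  have "last p \<in> sinks ar"
  proof (rule ccontr)
    assume "last p \<notin> sinks ar"
    then obtain y where "ar (last p) y" unfolding sinks_def by auto
    then show False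
      using longest[of "p @ [y]"] oriented_path_snoc[OF p(1)] p(2) oriented_path_nonempty[OF p(1)]
      by simp
  qed
  then show ?thesis using p unfolding paths_from_def by blast
qed

lemma paths_to_nonempty: "\<exists>\<alpha>. \<alpha> \<in> paths_to v"
proof -
  from finite_has_longest[OF finite_oriented_paths_to[of v], of "[v]"]
  obtain p where p: "oriented_path ar p" "last p = v"
    and longest: "\<And>q. oriented_path ar q \<Longrightarrow> last q = v \<Longrightarrow> length q \<le> length p"
    by auto
  have "hd p \<in> sources ar"
  proof (rule ccontr)
    assume "hd p \<notin> sources ar"
    then obtain y where "ar y (hd p)" unfolding sources_def by auto
    then show False
      using longest[of "y # p"] oriented_path_Cons[of p ar y] p oriented_path_nonempty[OF p(1)]
      by simp
  qed
  then show ?thesis using p unfolding paths_to_def by blast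
qed

end

section \<open>Derivatives of \<open>P\<^sub>t\<close> and \<open>Q\<^sub>t\<close>\<close>

context graded_flow
begin

abbreviation M :: "'v list \<Rightarrow> real" where
  "M zs \<equiv> mfun ar (f 0) (g 0) zs"

lemma mfun_eq_sum_at:
  assumes t: "t \<in> {0..1}"
  shows "mfun ar (f 0) (g 0) zs = (\<Sum>p\<in>extremal_through zs. C t p)"
  unfolding mfun_def extremal_through_def
  by (rule sum.cong[OF refl]) (use Cpath_extremal_const[OF _ t] in simp)

text \<open>\<open>weight_from t v = m(v) P\<^sub>t(v)\<close> and \<open>weight_to t v = m(v) Q\<^sub>t(v)\<close>. Gluing paths at
  \<open>v\<close> divides by \<open>f t v\<close> (\<open>Cpath_glue\<close>) unless \<open>v\<close> is a source, resp. sink, where the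
  glued-on path is \<open>[v]\<close>; \<open>in_factor\<close> and \<open>out_factor\<close> record the resulting factor.\<close>

definition weight_from :: "real \<Rightarrow> 'v \<Rightarrow> real" where
  "weight_from t v = (\<Sum>\<beta>\<in>paths_from v. C t \<beta>)"

definition weight_to :: "real \<Rightarrow> 'v \<Rightarrow> real" where
  "weight_to t v = (\<Sum>\<alpha>\<in>paths_to v. C t \<alpha>)"

definition in_factor :: "real \<Rightarrow> 'v \<Rightarrow> real" where
  "in_factor t v = (if v \<in> sources ar then 1 else weight_to t v / f t v)"

definition out_factor :: "real \<Rightarrow> 'v \<Rightarrow> real" where
  "out_factor t v = (if v \<in> sinks ar then 1 else weight_from t v / f t v)"

lemma sum_glue_in:
  assumes J: "\<And>j. j \<in> J \<Longrightarrow> hd (b j) = v \<and> length (b j) \<ge> 2"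
  shows "(\<Sum>\<alpha>\<in>paths_to v. \<Sum>j\<in>J. C t (\<alpha> @ tl (b j))) = in_factor t v * (\<Sum>j\<in>J. C t (b j))"
proof (cases "v \<in> sources ar")
  case True
  have "[v] @ tl (b j) = b j" if "j \<in> J" for j
    using J[OF that] by (cases "b j") auto
  then show ?thesis using True unfolding paths_to_source[OF True] in_factor_def by simp
next
  case False
  have "(\<Sum>\<alpha>\<in>paths_to v. \<Sum>j\<in>J. C t (\<alpha> @ tl (b j)))
      = (\<Sum>\<alpha>\<in>paths_to v. \<Sum>j\<in>J. C t \<alpha> / f t v * C t (b j))"
  proof (intro sum.cong refl)
    fix \<alpha> j assume a: "\<alpha> \<in> paths_to v" and j: "j \<in> J"
    have la: "length \<alpha> \<ge> 2" using paths_to_length[OF a False] .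
    have lst: "last \<alpha> = hd (b j)" using a J[OF j] unfolding paths_to_def by simp
    show "C t (\<alpha> @ tl (b j)) = C t \<alpha> / f t v * C t (b j)"
      using Cpath_glue[OF la _ lst, of "f t" "g t"] J[OF j] by simp
  qed
  also have "\<dots> = (\<Sum>\<alpha>\<in>paths_to v. C t \<alpha>) / f t v * (\<Sum>j\<in>J. C t (b j))"
    by (simp only: sum_distrib_left[symmetric] sum_distrib_right[symmetric]
        sum_divide_distrib[symmetric])
  finally show ?thesis using False unfolding in_factor_def weight_to_def by simp
qed

lemma sum_glue_out:
  assumes J: "\<And>j. j \<in> J \<Longrightarrow> last (a j) = v \<and> length (a j) \<ge> 2"
  shows "(\<Sum>j\<in>J. \<Sum>\<beta>\<in>paths_from v. C t (a j @ tl \<beta>)) = (\<Sum>j\<in>J. C t (a j)) * out_factor t v"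
proof (cases "v \<in> sinks ar")
  case True
  then show ?thesis unfolding paths_from_sink[OF True] out_factor_def by simp
next
  case False
  have "(\<Sum>j\<in>J. \<Sum>\<beta>\<in>paths_from v. C t (a j @ tl \<beta>))
      = (\<Sum>j\<in>J. \<Sum>\<beta>\<in>paths_from v. C t (a j) * (C t \<beta> / f t v))"
  proof (intro sum.cong refl)
    fix \<beta> j assume b: "\<beta> \<in> paths_from v" and j: "j \<in> J"
    have lb: "length \<beta> \<ge> 2" using paths_from_length[OF b False] .
    have lst: "last (a j) = hd \<beta>" using b J[OF j] unfolding paths_from_def by simp
    have hb: "hd \<beta> = v" using b unfolding paths_from_def by simp
    show "C t (a j @ tl \<beta>) = C t (a j) * (C t \<beta> / f t v)"
      using Cpath_glue[OF _ lb lst, of "f t" "g t"] J[OF j] hb by simp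
  qed
  also have "\<dots> = (\<Sum>j\<in>J. C t (a j)) * ((\<Sum>\<beta>\<in>paths_from v. C t \<beta>) / f t v)"
    by (simp only: sum_distrib_left[symmetric] sum_distrib_right[symmetric]
        sum_divide_distrib[symmetric])
  finally show ?thesis using False unfolding out_factor_def weight_from_def by simp
qed

lemma mfun_single_eq:
  assumes t: "t \<in> {0..1}"
  shows "mfun ar (f 0) (g 0) [v] = (\<Sum>\<alpha>\<in>paths_to v. \<Sum>\<beta>\<in>paths_from v. C t (\<alpha> @ tl \<beta>))"
proof -
  have "mfun ar (f 0) (g 0) [v] = (\<Sum>p\<in>extremal_through [v]. C t p)" by (rule mfun_eq_sum_at[OF t])
  also have "\<dots> = (\<Sum>z\<in>paths_to v \<times> paths_from v. C t (case z of (\<alpha>, \<beta>) \<Rightarrow> \<alpha> @ tl \<beta>))"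
    unfolding extremal_through_single_eq
    by (subst sum.reindex[OF inj_on_glue_paths]) (simp add: comp_def)
  also have "\<dots> = (\<Sum>\<alpha>\<in>paths_to v. \<Sum>\<beta>\<in>paths_from v. C t (\<alpha> @ tl \<beta>))"
    by (simp add: sum.cartesian_product prod.case_distrib)
  finally show ?thesis .
qed

lemma mfun_arrow_eq:
  assumes t: "t \<in> {0..1}" and axy: "ar x0 x"
  shows "mfun ar (f 0) (g 0) [x0, x] = (\<Sum>\<alpha>\<in>paths_to x0. \<Sum>\<gamma>\<in>paths_from x. C t (\<alpha> @ \<gamma>))"
proof -
  have "mfun ar (f 0) (g 0) [x0, x] = (\<Sum>p\<in>extremal_through [x0, x]. C t p)"
    by (rule mfun_eq_sum_at[OF t])
  also have "\<dots> = (\<Sum>z\<in>paths_to x0 \<times> paths_from x. C t (case z of (\<alpha>, \<gamma>) \<Rightarrow> \<alpha> @ \<gamma>))"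
    unfolding extremal_through_arrow_eq[OF axy]
    by (subst sum.reindex[OF inj_on_append_paths[OF axy]]) (simp add: comp_def)
  also have "\<dots> = (\<Sum>\<alpha>\<in>paths_to x0. \<Sum>\<gamma>\<in>paths_from x. C t (\<alpha> @ \<gamma>))"
    by (simp add: sum.cartesian_product prod.case_distrib)
  finally show ?thesis .
qed

lemma mfun_single_in: "t \<in> {0..1} \<Longrightarrow> v \<notin> sinks ar \<Longrightarrow> M [v] = in_factor t v * weight_from t v"
  unfolding mfun_single_eq weight_from_def
  by (rule sum_glue_in) (use paths_from_length in \<open>auto simp: paths_from_def\<close>)

lemma mfun_single_out: "t \<in> {0..1} \<Longrightarrow> v \<notin> sources ar \<Longrightarrow> M [v] = weight_to t v * out_factor t v"
  unfolding mfun_single_eq weight_to_def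
  by (rule sum_glue_out[where a="\<lambda>x. x", simplified])
    (use paths_to_length in \<open>auto simp: paths_to_def\<close>)

lemma mfun_arrow_in:
  assumes t: "t \<in> {0..1}" and axy: "ar x0 x"
  shows "M [x0, x] = in_factor t x0 * (\<Sum>\<gamma>\<in>paths_from x. C t (x0 # \<gamma>))"
proof -
  have "M [x0, x] = (\<Sum>\<alpha>\<in>paths_to x0. \<Sum>\<gamma>\<in>paths_from x. C t (\<alpha> @ tl (x0 # \<gamma>)))"
    unfolding mfun_arrow_eq[OF t axy] by simp
  also have "\<dots> = in_factor t x0 * (\<Sum>\<gamma>\<in>paths_from x. C t (x0 # \<gamma>))"
    by (rule sum_glue_in) (use oriented_path_nonempty in \<open>auto simp: paths_from_def Suc_le_eq\<close>)
  finally show ?thesis .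
qed

lemma mfun_arrow_out:
  assumes t: "t \<in> {0..1}" and axy: "ar x x1"
  shows "M [x, x1] = (\<Sum>\<alpha>\<in>paths_to x. C t (\<alpha> @ [x1])) * out_factor t x1"
proof -
  have "M [x, x1] = (\<Sum>\<alpha>\<in>paths_to x. \<Sum>\<gamma>\<in>paths_from x1. C t ((\<alpha> @ [x1]) @ tl \<gamma>))"
    unfolding mfun_arrow_eq[OF t axy]
  proof (intro sum.cong refl)
    fix \<alpha> \<gamma> assume "\<gamma> \<in> paths_from x1"
    then have "\<gamma> = x1 # tl \<gamma>" using oriented_path_nonempty unfolding paths_from_def
      by (cases \<gamma>) auto
    then show "C t (\<alpha> @ \<gamma>) = C t ((\<alpha> @ [x1]) @ tl \<gamma>)" by (metis append.assoc append_Cons append_Nil)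
  qed
  also have "\<dots> = (\<Sum>\<alpha>\<in>paths_to x. C t (\<alpha> @ [x1])) * out_factor t x1"
    by (rule sum_glue_out) (use oriented_path_nonempty in \<open>auto simp: paths_to_def Suc_le_eq\<close>)
  finally show ?thesis .
qed

lemma mfun_single_pos:
  assumes "v \<notin> sources ar \<or> v \<notin> sinks ar"
  shows "0 < M [v]"
proof -
  have t0: "(0::real) \<in> {0..1}" by simp
  obtain \<alpha> \<beta> where a: "\<alpha> \<in> paths_to v" and b: "\<beta> \<in> paths_from v"
    using paths_to_nonempty paths_from_nonempty by blast
  have "\<alpha> \<noteq> []" using a oriented_path_nonempty unfolding paths_to_def by auto
  then have long: "2 \<le> length (\<alpha> @ tl \<beta>)"
    using assms paths_to_length[OF a] paths_from_length[OF b] by (cases \<alpha>) auto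
  have ex: "extremal_path ar (\<alpha> @ tl \<beta>)" and "\<alpha> @ tl \<beta> \<in> extremal_through [v]"
    using extremal_path_glue[OF a b] unfolding extremal_through_def visits_in_order_single by auto
  then have "C 0 (\<alpha> @ tl \<beta>) \<le> (\<Sum>q\<in>extremal_through [v]. C 0 q)"
    using Cpath_nonneg t0 finite_extremal_through_single
    by (intro member_le_sum) (auto simp: extremal_through_def extremal_path_def)
  moreover have "0 < C 0 (\<alpha> @ tl \<beta>)"
    using Cpath_pos[OF _ long t0] ex by (simp add: extremal_path_def)
  ultimately show ?thesis using mfun_eq_sum_at[OF t0] by simp
qed

lemma Cpath_flux_path_from:
  assumes "\<beta> \<in> paths_from x"
  shows "Cpath_flux t \<beta> = (\<Sum>x0\<in>{x0. ar x0 x}. C t (x0 # \<beta>))"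
proof -
  have no_out: "{x3. ar (last \<beta>) x3} = {}" and hd: "hd \<beta> = x"
    using assms unfolding paths_from_def sinks_def by auto
  show ?thesis unfolding Cpath_flux_def no_out hd by simp
qed

lemma Cpath_flux_path_to:
  assumes "\<alpha> \<in> paths_to x"
  shows "Cpath_flux t \<alpha> = - (\<Sum>x1\<in>{x1. ar x x1}. C t (\<alpha> @ [x1]))"
proof -
  have no_in: "{x0. ar x0 (hd \<alpha>)} = {}" and last: "last \<alpha> = x"
    using assms unfolding paths_to_def sources_def by auto
  show ?thesis unfolding Cpath_flux_def no_in last by simp
qed

lemma kernel_weight_from:
  assumes "t \<in> {0..1}" "ar x0 x"
  shows "M [x0, x] / M [x0] * weight_from t x0 = (\<Sum>\<gamma>\<in>paths_from x. C t (x0 # \<gamma>))"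
proof -
  have "x0 \<notin> sinks ar" using assms(2) unfolding sinks_def by auto
  then have "M [x0] = in_factor t x0 * weight_from t x0" "M [x0] \<noteq> 0"
    using mfun_single_in[OF assms(1)] mfun_single_pos[of x0] by auto
  then show ?thesis using mfun_arrow_in[OF assms] by simp
qed

lemma kernel_weight_to:
  assumes "t \<in> {0..1}" "ar x x1"
  shows "M [x, x1] / M [x1] * weight_to t x1 = (\<Sum>\<alpha>\<in>paths_to x. C t (\<alpha> @ [x1]))"
proof -
  have "x1 \<notin> sources ar" using assms(2) unfolding sources_def by auto
  then have "M [x1] = weight_to t x1 * out_factor t x1" "M [x1] \<noteq> 0"
    using mfun_single_out[OF assms(1)] mfun_single_pos[of x1] by auto
  then show ?thesis using mfun_arrow_out[OF assms] by simp
qed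

lemma has_real_derivative_Pfun:
  assumes t: "t \<in> {0..1}"
  shows "((\<lambda>s. Pfun ar (f 0) (g 0) (f s) (g s) x) has_real_derivative
           Kop ar (f 0) (g 0) (Pfun ar (f 0) (g 0) (f t) (g t)) x) (at t within {0..1})"
proof -
  have P: "Pfun ar (f 0) (g 0) (f s) (g s) y = weight_from s y / M [y]" for s y
    unfolding Pfun_def weight_from_def paths_from_def by simp
  have "((\<lambda>s. weight_from s x / M [x]) has_real_derivative
      (\<Sum>\<beta>\<in>paths_from x. Cpath_flux t \<beta>) / M [x]) (at t within {0..1})"
    unfolding weight_from_def
    by (intro DERIV_cdivide DERIV_sum has_real_derivative_Cpath[OF _ t]) (simp add: paths_from_def)
  also have "(\<Sum>\<beta>\<in>paths_from x. Cpath_flux t \<beta>)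
      = (\<Sum>x0\<in>{x0. ar x0 x}. \<Sum>\<beta>\<in>paths_from x. C t (x0 # \<beta>))"
    by (simp add: Cpath_flux_path_from) (rule sum.swap)
  also have "\<dots> = (\<Sum>x0\<in>{x0. ar x0 x}. M [x0, x] / M [x0] * weight_from t x0)"
    by (rule sum.cong[OF refl], rule kernel_weight_from[OF t, symmetric]) simp
  finally show ?thesis
    unfolding Kop_def P by (simp add: sum_divide_distrib ac_simps)
qed

lemma has_real_derivative_Qfun:
  assumes t: "t \<in> {0..1}"
  shows "((\<lambda>s. Qfun ar (f 0) (g 0) (f s) (g s) x) has_real_derivative
           - Kstar ar (f 0) (g 0) (Qfun ar (f 0) (g 0) (f t) (g t)) x) (at t within {0..1})"
proof -
  have Q: "Qfun ar (f 0) (g 0) (f s) (g s) y = weight_to s y / M [y]" for s y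
    unfolding Qfun_def weight_to_def paths_to_def by simp
  have "((\<lambda>s. weight_to s x / M [x]) has_real_derivative
      (\<Sum>\<alpha>\<in>paths_to x. Cpath_flux t \<alpha>) / M [x]) (at t within {0..1})"
    unfolding weight_to_def
    by (intro DERIV_cdivide DERIV_sum has_real_derivative_Cpath[OF _ t]) (simp add: paths_to_def)
  also have "(\<Sum>\<alpha>\<in>paths_to x. Cpath_flux t \<alpha>)
      = - (\<Sum>x1\<in>{x1. ar x x1}. \<Sum>\<alpha>\<in>paths_to x. C t (\<alpha> @ [x1]))"
    by (simp add: Cpath_flux_path_to sum_negf) (rule sum.swap)
  also have "\<dots> = - (\<Sum>x1\<in>{x1. ar x x1}. M [x, x1] / M [x1] * weight_to t x1)"
    by (rule arg_cong[where f=uminus], rule sum.cong[OF refl], rule kernel_weight_to[OF t, symmetric])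
      simp
  finally show ?thesis
    unfolding Kstar_def Q by (simp add: sum_divide_distrib ac_simps)
qed

end

theorem proposition3p13:
  fixes adj :: "'v \<Rightarrow> 'v \<Rightarrow> bool"
    and f :: "real \<Rightarrow> 'v \<Rightarrow> real"
    and g :: "real \<Rightarrow> 'v \<Rightarrow> 'v \<Rightarrow> real"
    and h :: "real \<Rightarrow> 'v \<Rightarrow> 'v \<Rightarrow> 'v \<Rightarrow> real"
  assumes "symp adj"
    and "graph_connected adj"
    and "locally_finite adj"
    and "W1plus_geodesic adj f g h"
  shows "\<forall>x. \<forall>t\<in>{0..1}.
      ((\<lambda>s. Pfun (w1_arrow adj (f 0) (f 1)) (f 0) (g 0) (f s) (g s) x)
         has_real_derivative
         Kop (w1_arrow adj (f 0) (f 1)) (f 0) (g 0)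
             (Pfun (w1_arrow adj (f 0) (f 1)) (f 0) (g 0) (f t) (g t)) x) (at t within {0..1})
    \<and> ((\<lambda>s. Qfun (w1_arrow adj (f 0) (f 1)) (f 0) (g 0) (f s) (g s) x)
         has_real_derivative
         - Kstar (w1_arrow adj (f 0) (f 1)) (f 0) (g 0)
             (Qfun (w1_arrow adj (f 0) (f 1)) (f 0) (g 0) (f t) (g t)) x) (at t within {0..1})"
proof -
  let ?ar = "w1_arrow adj (f 0) (f 1)"
  note geo = assms(4)[unfolded W1plus_geodesic_def Let_def]
  have prob: "\<And>t. t \<in> {0..1} \<Longrightarrow> prob_dist (f t)" using geo by blast
  interpret graded_orientation ?ar "gdist adj"
    using finite_w1_arrows[OF assms(3) prob prob] w1_oriented_path_gdist[OF assms(2)]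
    by unfold_locales auto
  interpret graded_flow ?ar "gdist adj" f g h
    using geo prob unfolding prob_dist_def by unfold_locales blast+
  show ?thesis using has_real_derivative_Pfun has_real_derivative_Qfun by blast
qed

end
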